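(* Assume $n$ is sufficiently large and $2\le r<\sqrt[5]{\ln n}$. Let $H=(V,E)$ be an $n$-uniform hypergraph with $|E|\le 0.01\left(\frac{n}{\ln n}\right)^{\frac{r-1}{r}}r^{n-1}$, and let the weights $\sigma(v)$, $v\in V$, be independent and uniform on $[0,1)$. For $i=1,\dots,r-1$ let $X(i)$ be the number of vertices in $\delta_i$ that receive color $i+1$ in the coloring $C^0$ produced by Algorithm 1. Then (i) $\mathbb{E}X(i)\le 0.04e\cdot\frac{n}{r\ln n}$ for every $i=1,\dots,r-1$; (ii) with probability at least $1-0.04e$, $X(i)\le\frac{n}{\ln n}$ holds for every $i=1,\dots,r-1$.
   Context: Colors are $\{1,\dots,r\}$. Put $p=\frac{r-1}{r}\cdot\frac{\ln(n/\ln n)}{n}$. Partition $[0,1)$ into consecutive half-open intervals $\Delta_1,\delta_1,\Delta_2,\dots,\delta_{r-1},\Delta_r$ (left to right), $\Delta_i=\big[(i-1)(\tfrac{1-p}{r}+\tfrac{p}{r-1}),\ i\tfrac{1-p}{r}+(i-1)\tfrac{p}{r-1}\big)$, $\delta_i=\big[i\tfrac{1-p}{r}+(i-1)\tfrac{p}{r-1},\ i(\tfrac{1-p}{r}+\tfrac{p}{r-1})\big)$. A vertex $v$ belongs to interval $I$ if $\sigma(v)\in I$. Algorithm 1 (for injective $\sigma$, which holds almost surely): every vertex in $\Delta_i$ gets color $i$; then the vertices in $\bigcup_i\delta_i$ are processed in increasing order of weight, and $v\in\delta_i$ gets color $i$ unless some edge containing $v$ has all its other vertices already colored $i$, in which case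 $v$ gets color $i+1$. The resulting coloring is $C^0$. *)

theory Defs
  imports "HOL-Probability.Probability"
begin

definition pval :: "nat \<Rightarrow> nat \<Rightarrow> real" where
  "pval n r = (real r - 1) / real r * ln (real n / ln (real n)) / real n"

definition BigDelta :: "nat \<Rightarrow> nat \<Rightarrow> nat \<Rightarrow> real set" where
  "BigDelta n r i = (let p = pval n r in
     {(real i - 1) * ((1 - p) / real r + p / (real r - 1)) ..<
       real i * (1 - p) / real r + (real i - 1) * p / (real r - 1)})"

definition SmallDelta :: "nat \<Rightarrow> nat \<Rightarrow> nat \<Rightarrow> real set" where
  "SmallDelta n r i = (let p = pval n r in
     {real i * (1 - p) / real r + (real i - 1) * p / (real r - 1) ..<
       real i * ((1 - p) / real r + p / (real r - 1))})"

text \<open>A vertex in some Delta_i gets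
  colour i; a vertex v in delta_i gets colour i+1 iff some edge containing v has all its
  other vertices already coloured i, where "already coloured" means lying in some Delta_j
  (coloured in the first phase) or being a delta-vertex of smaller weight (processed
  earlier). Colour 0 marks vertices with weight outside [0,1) (a null event).\<close>
fun alg1_iter :: "nat \<Rightarrow> nat \<Rightarrow> 'a set set \<Rightarrow> ('a \<Rightarrow> real) \<Rightarrow> nat \<Rightarrow> 'a \<Rightarrow> nat" where
  "alg1_iter n r E \<sigma> 0 v = 0"
| "alg1_iter n r E \<sigma> (Suc k) v =
     (if \<exists>i\<in>{1..r}. \<sigma> v \<in> BigDelta n r i
      then (LEAST i. i \<in> {1..r} \<and> \<sigma> v \<in> BigDelta n r i)
      else if \<exists>i\<in>{1..<r}. \<sigma> v \<in> SmallDelta n r i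
      then (let i = (LEAST i. i \<in> {1..<r} \<and> \<sigma> v \<in> SmallDelta n r i) in
            if \<exists>e\<in>E. v \<in> e \<and>
                 (\<forall>u\<in>e - {v}. ((\<exists>j\<in>{1..r}. \<sigma> u \<in> BigDelta n r j) \<or> \<sigma> u < \<sigma> v)
                                 \<and> alg1_iter n r E \<sigma> k u = i)
            then i + 1 else i)
      else 0)"

text \<open>The colouring C^0; depth card V + 1 suffices for the recursion to stabilise
  (chains of strictly increasing weights in V have length at most card V).\<close>
definition C0 :: "nat \<Rightarrow> nat \<Rightarrow> 'a set \<Rightarrow> 'a set set \<Rightarrow> ('a \<Rightarrow> real) \<Rightarrow> 'a \<Rightarrow> nat" where
  "C0 n r V E \<sigma> v = alg1_iter n r E \<sigma> (Suc (card V)) v"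

definition Xcnt :: "nat \<Rightarrow> nat \<Rightarrow> 'a set \<Rightarrow> 'a set set \<Rightarrow> nat \<Rightarrow> ('a \<Rightarrow> real) \<Rightarrow> nat" where
  "Xcnt n r V E i \<sigma> = card {v \<in> V. \<sigma> v \<in> SmallDelta n r i \<and> C0 n r V E \<sigma> v = i + 1}"

definition weight_space :: "'a set \<Rightarrow> ('a \<Rightarrow> real) measure" where
  "weight_space V = PiM V (\<lambda>_. uniform_measure lborel {0..<1})"

end

theory Submission
  imports Defs "HOL-Real_Asymp.Real_Asymp"
begin

text \<open>A vertex v in delta_i can only receive colour i + 1 through a chain of edges e_0, ..., e_k
  with k < i: v lies in e_0, consecutive edges share a single vertex u_(j+1) lying in
  delta_(i-j-1), and all other vertices of e_j have weights in the window
  [sigma u_(j+1), sigma u_j) (for the last edge, in [start of Delta_(i-k), sigma u_k)), whose length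
  is about b = |Delta|. For fixed edges, integrating out these n - 2 (n - 1 for e_k) free weights
  and then the weights of the chain vertices bounds the probability of the chain by
  D^((n-2)k) b^(n-1) q^k exp((n-1) q/b) D/(n-2), where q = |delta| and D = b + q. There are at most
  n |E|^(k+1) candidate chains of length k, so E X(i) is bounded by a geometric series whose ratio
  |E| D^(n-2) q is at most 1/100 by the bound on |E|, and whose sum is at most 0.04 e n/(r ln n).
  Part (ii) then follows from Markov's inequality and a union bound over i.\<close>

section \<open>The intervals Delta_i and delta_i\<close>

definition big_len :: "nat \<Rightarrow> nat \<Rightarrow> real" where
  "big_len n r = (1 - pval n r) / real r"

definition small_len :: "nat \<Rightarrow> nat \<Rightarrow> real" where
  "small_len n r = pval n r / (real r - 1)"

definition period :: "nat \<Rightarrow> nat \<Rightarrow> real" where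
  "period n r = big_len n r + small_len n r"

definition block_start :: "nat \<Rightarrow> nat \<Rightarrow> nat \<Rightarrow> real" where
  "block_start n r i = (real i - 1) * period n r"

lemma BigDelta_eq: "BigDelta n r i = {block_start n r i ..< block_start n r i + big_len n r}"
  unfolding BigDelta_def block_start_def period_def big_len_def small_len_def Let_def
  by (simp add: algebra_simps add_divide_distrib diff_divide_distrib)

lemma SmallDelta_eq:
  "SmallDelta n r i = {block_start n r i + big_len n r ..< block_start n r i + period n r}"
  unfolding SmallDelta_def block_start_def period_def big_len_def small_len_def Let_def
  by (simp add: algebra_simps add_divide_distrib diff_divide_distrib)

lemma block_start_diff: "block_start n r j - block_start n r i = (real j - real i) * period n r"
  unfolding block_start_def by (simp add: algebra_simps)

definition valid_params :: "nat \<Rightarrow> nat \<Rightarrow> bool" where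
  "valid_params n r \<longleftrightarrow> 2 \<le> r \<and> 0 < pval n r \<and> pval n r < 1/2"

lemma valid_params_pos:
  assumes "valid_params n r"
  shows "0 < big_len n r" "0 < small_len n r" "0 < period n r"
proof -
  show b: "0 < big_len n r" "0 < small_len n r"
    using assms unfolding valid_params_def big_len_def small_len_def by auto
  then show "0 < period n r" by (simp add: period_def)
qed

lemma block_less:
  assumes "valid_params n r" "i < j"
    and "x < block_start n r i + period n r" "block_start n r j \<le> y"
  shows "x < y"
proof -
  have "period n r \<le> (real j - real i) * period n r"
    using assms(2) valid_params_pos(3)[OF assms(1)] by (simp add: mult_le_cancel_right1)
  then show ?thesis using assms(3,4) block_start_diff[of n r j i] by linarith
qed

lemma block_unique:
  assumes "valid_params n r"
    and "block_start n r i \<le> x" "x < block_start n r i + period n r"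
    and "block_start n r j \<le> x" "x < block_start n r j + period n r"
  shows "i = j"
  using block_less[OF assms(1), of i j x x] block_less[OF assms(1), of j i x x] assms
  by (metis linorder_neqE_nat order_less_irrefl)

lemma BigDelta_in_block:
  "valid_params n r \<Longrightarrow> x \<in> BigDelta n r i \<Longrightarrow>
     block_start n r i \<le> x \<and> x < block_start n r i + period n r"
  using valid_params_pos[of n r] by (auto simp: BigDelta_eq period_def)

lemma SmallDelta_in_block:
  "valid_params n r \<Longrightarrow> x \<in> SmallDelta n r i \<Longrightarrow>
     block_start n r i \<le> x \<and> x < block_start n r i + period n r"
  using valid_params_pos[of n r] by (auto simp: SmallDelta_eq)

lemma SmallDelta_less:
  "valid_params n r \<Longrightarrow> x \<in> SmallDelta n r i \<Longrightarrow> y \<in> SmallDelta n r j \<Longrightarrow> i < j \<Longrightarrow> x < y"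
  using block_less[of n r i j x y] SmallDelta_in_block[of n r] by blast

lemma BigDelta_unique:
  "valid_params n r \<Longrightarrow> x \<in> BigDelta n r i \<Longrightarrow> x \<in> BigDelta n r j \<Longrightarrow> i = j"
  using block_unique BigDelta_in_block by blast

lemma SmallDelta_unique:
  "valid_params n r \<Longrightarrow> x \<in> SmallDelta n r i \<Longrightarrow> x \<in> SmallDelta n r j \<Longrightarrow> i = j"
  using block_unique SmallDelta_in_block by blast

lemma BigDelta_SmallDelta_disjoint:
  assumes "valid_params n r" "x \<in> BigDelta n r i" "x \<in> SmallDelta n r j"
  shows False
proof -
  have "i = j" using block_unique BigDelta_in_block SmallDelta_in_block assms by blast
  then show False using assms by (auto simp: BigDelta_eq SmallDelta_eq)
qed

lemma BigDelta_less_SmallDelta: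
  "x \<in> BigDelta n r i \<Longrightarrow> y \<in> SmallDelta n r i \<Longrightarrow> x < y"
  by (auto simp: SmallDelta_eq BigDelta_eq)

lemma SmallDelta_below_next_block:
  "1 \<le> i \<Longrightarrow> x \<in> SmallDelta n r (i - 1) \<Longrightarrow> x < block_start n r i"
  using block_start_diff[of n r i "i - 1"] by (auto simp: SmallDelta_eq of_nat_diff)

lemma BigDelta_ge_block_start: "x \<in> BigDelta n r i \<Longrightarrow> block_start n r i \<le> x"
  by (auto simp: BigDelta_eq)

lemma Least_BigDelta:
  assumes "valid_params n r" "i \<in> {1..r}" "x \<in> BigDelta n r i"
  shows "(LEAST i. i \<in> {1..r} \<and> x \<in> BigDelta n r i) = i"
  by (rule Least_equality) (use assms BigDelta_unique[OF assms(1)] in force)+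

lemma Least_SmallDelta:
  assumes "valid_params n r" "i \<in> {1..<r}" "x \<in> SmallDelta n r i"
  shows "(LEAST i. i \<in> {1..<r} \<and> x \<in> SmallDelta n r i) = i"
  by (rule Least_equality) (use assms SmallDelta_unique[OF assms(1)] in force)+

section \<open>Witness chains for recoloured vertices\<close>

lemma alg1_iter_colour_cases:
  assumes "valid_params n r" "alg1_iter n r E \<sigma> k u = c" "1 \<le> c"
  shows "(\<sigma> u \<in> BigDelta n r c \<and> c \<le> r) \<or> (\<sigma> u \<in> SmallDelta n r c \<and> c < r)
       \<or> (\<sigma> u \<in> SmallDelta n r (c - 1) \<and> 2 \<le> c \<and> c - 1 < r)"
proof (cases k)
  case 0 then show ?thesis using assms by simp
next
  case (Suc k')
  show ?thesis
  proof (cases "\<exists>i\<in>{1..r}. \<sigma> u \<in> BigDelta n r i")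
    case True
    then obtain i where i: "i \<in> {1..r}" "\<sigma> u \<in> BigDelta n r i" by blast
    then have "c = i" using assms(2) True Least_BigDelta[OF assms(1) i] Suc by simp
    then show ?thesis using i by auto
  next
    case not_big: False
    show ?thesis
    proof (cases "\<exists>i\<in>{1..<r}. \<sigma> u \<in> SmallDelta n r i")
      case True
      then obtain i where i: "i \<in> {1..<r}" "\<sigma> u \<in> SmallDelta n r i" by blast
      then have "c = i \<or> c = i + 1"
        using assms(2) not_big Least_SmallDelta[OF assms(1) i] Suc
        by (auto simp: Let_def split: if_splits)
      then show ?thesis using i by auto
    next
      case False
      then show ?thesis using assms not_big Suc by simp
    qed
  qed
qed

lemma alg1_iter_Suc_SmallDelta:
  assumes "valid_params n r" "i \<in> {1..<r}" "\<sigma> v \<in> SmallDelta n r i"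
  shows "alg1_iter n r E \<sigma> (Suc k) v =
     (if \<exists>e\<in>E. v \<in> e \<and>
                 (\<forall>u\<in>e - {v}. ((\<exists>j\<in>{1..r}. \<sigma> u \<in> BigDelta n r j) \<or> \<sigma> u < \<sigma> v)
                                 \<and> alg1_iter n r E \<sigma> k u = i)
      then i + 1 else i)"
proof -
  have "\<not> (\<exists>i\<in>{1..r}. \<sigma> v \<in> BigDelta n r i)"
    using BigDelta_SmallDelta_disjoint assms by blast
  then show ?thesis using assms Least_SmallDelta[OF assms] by (auto simp: Let_def)
qed

definition chain_vertex :: "(nat \<Rightarrow> 'a set) \<Rightarrow> 'a \<Rightarrow> nat \<Rightarrow> 'a" where
  "chain_vertex es v j = (if j = 0 then v else (SOME u. u \<in> es (j - 1) \<inter> es j))"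

text \<open>The chain e_0, ..., e_k witnessing that v in delta_i received colour i + 1, with
  u_j = chain_vertex es v j: u_0 = v and u_(j+1) is a vertex shared by e_j and e_(j+1), chosen
  by SOME (in the chains built by witness_chain_Cons the intersection is a single vertex).\<close>
definition witness_chain ::
    "nat \<Rightarrow> nat \<Rightarrow> 'a set set \<Rightarrow> nat \<Rightarrow> nat \<Rightarrow> (nat \<Rightarrow> 'a set) \<Rightarrow> 'a \<Rightarrow> ('a \<Rightarrow> real) \<Rightarrow> bool"
  where
  "witness_chain n r E i k es v \<sigma> \<longleftrightarrow>
     (\<forall>j\<le>k. es j \<in> E \<and> chain_vertex es v j \<in> es j
        \<and> \<sigma> (chain_vertex es v j) \<in> SmallDelta n r (i - j)) \<and>
     (\<forall>j<k. chain_vertex es v (Suc j) \<in> es j \<and>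
        (\<forall>w\<in>es j - {chain_vertex es v j}.
           \<sigma> (chain_vertex es v (Suc j)) \<le> \<sigma> w \<and> \<sigma> w < \<sigma> (chain_vertex es v j))) \<and>
     (\<forall>w\<in>es k - {chain_vertex es v k}.
        block_start n r (i - k) \<le> \<sigma> w \<and> \<sigma> w < \<sigma> (chain_vertex es v k))"

lemma witness_chain_head:
  assumes "witness_chain n r E i k es v \<sigma>"
  shows "v \<in> es 0" "\<forall>w\<in>es 0 - {v}. \<sigma> w < \<sigma> v"
proof -
  have u0: "chain_vertex es v 0 = v" by (simp add: chain_vertex_def)
  show "v \<in> es 0" using assms u0 unfolding witness_chain_def by (metis le0)
  show "\<forall>w\<in>es 0 - {v}. \<sigma> w < \<sigma> v"
  proof (cases k)
    case 0 then show ?thesis using assms u0 unfolding witness_chain_def by auto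
  next
    case (Suc k') then show ?thesis using assms u0 unfolding witness_chain_def by (metis zero_less_Suc)
  qed
qed

lemma witness_chain_restrict:
  "witness_chain n r E i k (restrict es {0..k}) v \<sigma> = witness_chain n r E i k es v \<sigma>"
proof -
  have "chain_vertex (restrict es {0..k}) v j = chain_vertex es v j" if "j \<le> k" for j
    using that by (cases j) (auto simp: chain_vertex_def)
  then show ?thesis unfolding witness_chain_def
    by (smt (verit) Suc_leI order_refl less_imp_le restrict_apply' atLeastAtMost_iff le0)
qed

lemma witness_chain_Cons:
  assumes chain: "witness_chain n r E (i - 1) k es u \<sigma>"
    and e: "e \<in> E" "v \<in> e" "\<sigma> v \<in> SmallDelta n r i" "u \<in> e - {v}"
    and between: "\<forall>w\<in>e - {v}. \<sigma> u \<le> \<sigma> w \<and> \<sigma> w < \<sigma> v"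
  shows "witness_chain n r E i (Suc k) (\<lambda>j. if j = 0 then e else es (j - 1)) v \<sigma>"
proof -
  define es' where "es' = (\<lambda>j. if j = 0 then e else es (j - 1))"
  have "e \<inter> es 0 = {u}"
  proof -
    have "w = u" if "w \<in> e" "w \<in> es 0" for w
    proof (rule ccontr)
      assume "w \<noteq> u"
      then have below: "\<sigma> w < \<sigma> u" using witness_chain_head(2)[OF chain] that by blast
      have "\<sigma> u \<le> \<sigma> w"
      proof (cases "w = v")
        case True then show ?thesis using between e(4) by fastforce
      next
        case False then show ?thesis using between that(1) by blast
      qed
      then show False using below by linarith
    qed
    then show ?thesis using witness_chain_head(1)[OF chain] e(4) by auto
  qed
  then have shift: "chain_vertex es' v (Suc j) = chain_vertex es u j" for j
    by (cases j) (simp_all add: chain_vertex_def es'_def)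
  have head: "chain_vertex es' v 0 = v" by (simp add: chain_vertex_def)
  have vertices: "es' j \<in> E \<and> chain_vertex es' v j \<in> es' j
      \<and> \<sigma> (chain_vertex es' v j) \<in> SmallDelta n r (i - j)" if "j \<le> Suc k" for j
  proof (cases j)
    case 0 then show ?thesis using e head by (simp add: es'_def)
  next
    case (Suc j')
    then show ?thesis using chain that shift unfolding witness_chain_def by (simp add: es'_def)
  qed
  have links: "chain_vertex es' v (Suc j) \<in> es' j \<and>
      (\<forall>w\<in>es' j - {chain_vertex es' v j}.
         \<sigma> (chain_vertex es' v (Suc j)) \<le> \<sigma> w \<and> \<sigma> w < \<sigma> (chain_vertex es' v j))"
    if "j < Suc k" for j
  proof (cases j)
    case 0 then show ?thesis using e(4) between head shift[of 0] witness_chain_head(1)[OF chain]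
      by (simp add: es'_def chain_vertex_def)
  next
    case (Suc j')
    then have "j' < k" using that by simp
    then show ?thesis using chain Suc shift unfolding witness_chain_def by (simp add: es'_def)
  qed
  have last: "block_start n r (i - Suc k) \<le> \<sigma> w \<and> \<sigma> w < \<sigma> (chain_vertex es' v (Suc k))"
    if "w \<in> es' (Suc k) - {chain_vertex es' v (Suc k)}" for w
    using chain that shift unfolding witness_chain_def by (simp add: es'_def)
  show ?thesis
    unfolding witness_chain_def es'_def[symmetric] using vertices links last by blast
qed

text \<open>Induction on i: the edge e that forced colour i + 1 on v either already closes the
  chain, or its lightest vertex other than v lies in delta_(i-1) and itself received colour i.\<close>
lemma colour_up_imp_witness_chain:
  assumes valid: "valid_params n r" and fin: "\<forall>e\<in>E. finite e"
  shows "1 \<le> i \<Longrightarrow> i < r \<Longrightarrow> \<sigma> v \<in> SmallDelta n r i \<Longrightarrow> alg1_iter n r E \<sigma> m v = i + 1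
          \<Longrightarrow> \<exists>k<i. \<exists>es. witness_chain n r E i k es v \<sigma>"
proof (induction i arbitrary: v m)
  case 0 then show ?case by simp
next
  case (Suc i')
  define i where "i = Suc i'"
  have i: "1 \<le> i" "i < r" and v: "\<sigma> v \<in> SmallDelta n r i" and col: "alg1_iter n r E \<sigma> m v = i + 1"
    using Suc.prems by (auto simp: i_def)
  obtain m' where m: "m = Suc m'" using col by (cases m) auto
  have iin: "i \<in> {1..<r}" using i by simp
  have "\<exists>e\<in>E. v \<in> e \<and> (\<forall>u\<in>e - {v}. ((\<exists>j\<in>{1..r}. \<sigma> u \<in> BigDelta n r j) \<or> \<sigma> u < \<sigma> v)
                                 \<and> alg1_iter n r E \<sigma> m' u = i)"
    using col alg1_iter_Suc_SmallDelta[where \<sigma>=\<sigma> and v=v and E=E and k=m', OF valid iin v] m by (auto split: if_splits)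
  then obtain e where e: "e \<in> E" "v \<in> e"
    and forced: "\<And>u. u \<in> e - {v} \<Longrightarrow> ((\<exists>j\<in>{1..r}. \<sigma> u \<in> BigDelta n r j) \<or> \<sigma> u < \<sigma> v)
                                 \<and> alg1_iter n r E \<sigma> m' u = i" by blast
  have other: "(block_start n r i \<le> \<sigma> u \<and> \<sigma> u < \<sigma> v) \<or> (\<sigma> u \<in> SmallDelta n r (i - 1) \<and> 2 \<le> i)"
    if "u \<in> e - {v}" for u
  proof -
    have col_u: "alg1_iter n r E \<sigma> m' u = i"
      and earlier: "(\<exists>j\<in>{1..r}. \<sigma> u \<in> BigDelta n r j) \<or> \<sigma> u < \<sigma> v"
      using forced[OF that] by auto
    from alg1_iter_colour_cases[OF valid col_u] i
    consider "\<sigma> u \<in> BigDelta n r i" | "\<sigma> u \<in> SmallDelta n r i"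
      | "\<sigma> u \<in> SmallDelta n r (i - 1) \<and> 2 \<le> i"
      by auto
    then show ?thesis
    proof cases
      case 1 then show ?thesis using BigDelta_ge_block_start BigDelta_less_SmallDelta[OF 1 v] by blast
    next
      case 2
      then have "\<not> (\<exists>j\<in>{1..r}. \<sigma> u \<in> BigDelta n r j)"
        using BigDelta_SmallDelta_disjoint[OF valid] by blast
      then show ?thesis using earlier SmallDelta_in_block[OF valid 2] by auto
    qed blast
  qed
  show ?case
  proof (cases "\<forall>u\<in>e - {v}. block_start n r i \<le> \<sigma> u \<and> \<sigma> u < \<sigma> v")
    case True
    then have "witness_chain n r E i 0 (\<lambda>_. e) v \<sigma>"
      unfolding witness_chain_def using e v by (auto simp: chain_vertex_def)
    then show ?thesis unfolding i_def by blast
  next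
    case False
    then obtain u' where u': "u' \<in> e - {v}" "\<sigma> u' \<in> SmallDelta n r (i - 1)" and i2: "2 \<le> i"
      using other by blast
    have fin_e: "finite (e - {v})" using fin e by auto
    obtain u where u: "u \<in> e - {v}" and lightest: "\<And>w. w \<in> e - {v} \<Longrightarrow> \<sigma> u \<le> \<sigma> w"
      using arg_min_if_finite(1)[OF fin_e] arg_min_least[OF fin_e] u'(1) by blast
    have "\<sigma> u < block_start n r i"
      using lightest[OF u'(1)] SmallDelta_below_next_block[OF i(1) u'(2)] by linarith
    then have u_small: "\<sigma> u \<in> SmallDelta n r (i - 1)" using other[OF u] by auto
    have "alg1_iter n r E \<sigma> m' u = (i - 1) + 1" using forced[OF u] i2 by auto
    then obtain k es where k: "k < i - 1" and chain: "witness_chain n r E (i - 1) k es u \<sigma>"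
      using Suc.IH[of u m'] u_small i i2 unfolding i_def by auto
    have "\<sigma> u \<le> \<sigma> w \<and> \<sigma> w < \<sigma> v" if "w \<in> e - {v}" for w
      using other[OF that] lightest[OF that]
        SmallDelta_below_next_block[OF i(1)] SmallDelta_in_block[OF valid v] by fastforce
    then have "witness_chain n r E i (Suc k) (\<lambda>j. if j = 0 then e else es (j - 1)) v \<sigma>"
      using witness_chain_Cons[OF chain e v u] by blast
    moreover have "Suc k < i" using k by simp
    ultimately show ?thesis unfolding i_def by blast
  qed
qed

section \<open>Independent uniform weights\<close>

abbreviation unif01 :: "real measure" where "unif01 \<equiv> uniform_measure lborel {0..<1::real}"

lemma prob_space_unif01: "prob_space unif01"
  by (rule prob_space_uniform_measure) auto

lemma emeasure_unif01_Ico_le: "emeasure unif01 {a..<b} \<le> ennreal (b - a)"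
proof -
  have "emeasure unif01 {a..<b} = emeasure lborel ({0..<1} \<inter> {a..<b}) / emeasure lborel {0..<1::real}"
    by (rule emeasure_uniform_measure) auto
  also have "\<dots> = emeasure lborel ({0..<1} \<inter> {a..<b})" by (simp add: divide_ennreal_def)
  also have "\<dots> \<le> emeasure lborel {a..<b}" by (rule emeasure_mono) auto
  also have "\<dots> \<le> ennreal (b - a)" by (cases "a \<le> b") auto
  finally show ?thesis .
qed

lemma product_prob_space_unif01: "product_prob_space (\<lambda>_::'a. unif01)"
  by (auto simp: product_prob_space_def product_prob_space_axioms_def product_sigma_finite_def
      prob_space_unif01 prob_space_imp_sigma_finite)

lemma prob_space_PiM_unif01: "prob_space (PiM I (\<lambda>_. unif01))"
  by (intro prob_space_PiM prob_space_unif01)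

lemma nn_integral_unif01_le_lborel: "f \<in> borel_measurable borel \<Longrightarrow> (\<integral>\<^sup>+x. f x \<partial>unif01) \<le> (\<integral>\<^sup>+x. f x * indicator {0..<1} x \<partial>lborel)"
  by (subst nn_integral_uniform_measure) (auto simp: divide_ennreal_def mult.commute)

lemma measurable_coordinate: "(\<lambda>\<sigma>. \<sigma> v) \<in> borel_measurable (PiM V (\<lambda>_. unif01))"
proof (cases "v \<in> V")
  case True
  then show ?thesis
    using measurable_component_singleton[of v V "\<lambda>_. unif01"] by (simp add: measurable_def)
next
  case False
  have "(\<lambda>\<sigma>. \<sigma> v) \<in> borel_measurable (PiM V (\<lambda>_. unif01)) \<longleftrightarrow> (\<lambda>\<sigma>. undefined :: real) \<in> borel_measurable (PiM V (\<lambda>_. unif01))"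
  proof (rule Sigma_Algebra.measurable_cong)
    fix w :: "'a \<Rightarrow> real" assume "w \<in> space (PiM V (\<lambda>_. unif01))"
    then have "w \<in> PiE V (\<lambda>_. space unif01)" by (simp add: space_PiM)
    then show "w v = undefined" using False by (rule PiE_arb)
  qed
  then show ?thesis by simp
qed

lemma measurable_window_indicator:
  assumes "lo \<in> borel_measurable (PiM V (\<lambda>_. unif01))" "hi \<in> borel_measurable (PiM V (\<lambda>_. unif01))"
  shows "(\<lambda>\<sigma>. if lo \<sigma> \<le> \<sigma> w \<and> \<sigma> w < hi \<sigma> then 1 else 0 :: ennreal) \<in> borel_measurable (PiM V (\<lambda>_. unif01))"
proof -
  let ?A = "{\<sigma>. lo \<sigma> \<le> \<sigma> w \<and> \<sigma> w < hi \<sigma>}"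
  have "?A \<inter> space (PiM V (\<lambda>_. unif01)) = {\<sigma> \<in> space (PiM V (\<lambda>_. unif01)). lo \<sigma> \<le> \<sigma> w} \<inter> {\<sigma> \<in> space (PiM V (\<lambda>_. unif01)). \<sigma> w < hi \<sigma>}"
    by auto
  also have "\<dots> \<in> sets (PiM V (\<lambda>_. unif01))"
    using measurable_coordinate assms by (intro sets.Int borel_measurable_le borel_measurable_less)
  finally have "?A \<inter> space (PiM V (\<lambda>_. unif01)) \<in> sets (PiM V (\<lambda>_. unif01))" .
  then have "(\<lambda>\<sigma>. if \<sigma> \<in> ?A then 1 else 0 :: ennreal) \<in> borel_measurable (PiM V (\<lambda>_. unif01))"
    by (intro measurable_If_set) auto
  then show ?thesis by simp
qed

lemma nn_integral_PiM_windows_le: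
  fixes S :: "'a set" and L U :: "'a \<Rightarrow> real"
  assumes "finite S"
  shows "(\<integral>\<^sup>+y. (\<Prod>w\<in>S. if L w \<le> y w \<and> y w < U w then 1 else 0) \<partial>PiM S (\<lambda>_. unif01))
    \<le> (\<Prod>w\<in>S. ennreal (U w - L w))"
proof -
  interpret unif01_product: product_prob_space "\<lambda>_::'a. unif01" by (rule product_prob_space_unif01)
  have "(\<integral>\<^sup>+y. (\<Prod>w\<in>S. if L w \<le> y w \<and> y w < U w then 1 else 0) \<partial>PiM S (\<lambda>_. unif01))
      = (\<Prod>w\<in>S. \<integral>\<^sup>+t. (if L w \<le> t \<and> t < U w then 1 else 0) \<partial>unif01)"
    using assms by (rule unif01_product.product_nn_integral_prod) auto
  also have "\<dots> \<le> (\<Prod>w\<in>S. ennreal (U w - L w))"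
  proof (rule prod_mono_ennreal)
    fix w
    have "(\<integral>\<^sup>+t. (if L w \<le> t \<and> t < U w then 1 else 0) \<partial>unif01) = (\<integral>\<^sup>+t. indicator {L w..<U w} t \<partial>unif01)"
      by (intro nn_integral_cong) (auto simp: indicator_def)
    also have "\<dots> = emeasure unif01 {L w..<U w}" by (rule nn_integral_indicator) auto
    also have "\<dots> \<le> ennreal (U w - L w)" by (rule emeasure_unif01_Ico_le)
    finally show "(\<integral>\<^sup>+t. (if L w \<le> t \<and> t < U w then 1 else 0) \<partial>unif01) \<le> ennreal (U w - L w)" .
  qed
  finally show ?thesis .
qed

text \<open>Fubini over the coordinates in S: once the other coordinates are fixed, so are the
  windows, and a uniform weight falls into a window with probability at most its length.\<close>
lemma nn_integral_PiM_window_indicators_le: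
  fixes V S :: "'a set" and lo hi :: "'a \<Rightarrow> ('a \<Rightarrow> real) \<Rightarrow> real" and h :: "('a \<Rightarrow> real) \<Rightarrow> ennreal"
  assumes V: "finite V" and SV: "S \<subseteq> V"
    and hm[measurable]: "h \<in> borel_measurable (PiM V (\<lambda>_. unif01))"
    and lom[measurable]: "\<And>w. w \<in> S \<Longrightarrow> lo w \<in> borel_measurable (PiM V (\<lambda>_. unif01))"
    and him[measurable]: "\<And>w. w \<in> S \<Longrightarrow> hi w \<in> borel_measurable (PiM V (\<lambda>_. unif01))"
    and dep: "\<And>\<sigma> \<sigma>'. (\<forall>x\<in>V - S. \<sigma> x = \<sigma>' x) \<Longrightarrow>
                 h \<sigma> = h \<sigma>' \<and> (\<forall>w\<in>S. lo w \<sigma> = lo w \<sigma>' \<and> hi w \<sigma> = hi w \<sigma>')"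
  shows "(\<integral>\<^sup>+\<sigma>. h \<sigma> * (\<Prod>w\<in>S. (if lo w \<sigma> \<le> \<sigma> w \<and> \<sigma> w < hi w \<sigma> then 1 else 0)) \<partial>PiM V (\<lambda>_. unif01))
         \<le> (\<integral>\<^sup>+\<sigma>. h \<sigma> * (\<Prod>w\<in>S. ennreal (hi w \<sigma> - lo w \<sigma>)) \<partial>PiM V (\<lambda>_. unif01))"
proof -
  interpret unif01_product: product_prob_space "\<lambda>_::'a. unif01" by (rule product_prob_space_unif01)
  have S: "finite S" using V SV finite_subset by blast
  have VS: "V = (V - S) \<union> S" "(V - S) \<inter> S = {}" using SV by auto
  define F where "F = (\<lambda>\<sigma>. h \<sigma> * (\<Prod>w\<in>S. (if lo w \<sigma> \<le> \<sigma> w \<and> \<sigma> w < hi w \<sigma> then 1 else 0 :: ennreal)))"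
  define G where "G = (\<lambda>\<sigma>. h \<sigma> * (\<Prod>w\<in>S. ennreal (hi w \<sigma> - lo w \<sigma>)))"
  have Fm: "F \<in> borel_measurable (PiM V (\<lambda>_. unif01))"
    unfolding F_def using SV by (intro borel_measurable_times_ennreal borel_measurable_prod_ennreal measurable_window_indicator) auto
  have Gm: "G \<in> borel_measurable (PiM V (\<lambda>_. unif01))"
    unfolding G_def using SV by (intro borel_measurable_times_ennreal borel_measurable_prod_ennreal) auto
  define y0 :: "'a \<Rightarrow> real" where "y0 = (\<lambda>_. 0)"
  have agree: "\<forall>x'\<in>V - S. merge (V - S) S (x, y) x' = merge (V - S) S (x, y') x'" for x y y'
    using VS by auto
  have Fx: "(\<integral>\<^sup>+y. F (merge (V - S) S (x, y)) \<partial>PiM S (\<lambda>_. unif01))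
        \<le> (\<integral>\<^sup>+y. G (merge (V - S) S (x, y)) \<partial>PiM S (\<lambda>_. unif01))" for x
  proof -
    let ?m = "\<lambda>y. merge (V - S) S (x, y)"
    define L where "L w = lo w (?m y0)" for w
    define U where "U w = hi w (?m y0)" for w
    have eqF: "F (?m y) = h (?m y0) * (\<Prod>w\<in>S. (if L w \<le> y w \<and> y w < U w then 1 else 0 :: ennreal))" for y
      unfolding F_def L_def U_def using dep[OF agree[of x y y0]] VS
      by (intro arg_cong2[where f="(*)"] prod.cong) auto
    have eqG: "G (?m y) = h (?m y0) * (\<Prod>w\<in>S. ennreal (U w - L w))" for y
      unfolding G_def L_def U_def using dep[OF agree[of x y y0]] by auto
    have "(\<integral>\<^sup>+y. F (?m y) \<partial>PiM S (\<lambda>_. unif01))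
        = h (?m y0) * (\<integral>\<^sup>+y. (\<Prod>w\<in>S. (if L w \<le> y w \<and> y w < U w then 1 else 0 :: ennreal)) \<partial>PiM S (\<lambda>_. unif01))"
      unfolding eqF by (rule nn_integral_cmult) (use S in auto)
    also have "\<dots> \<le> h (?m y0) * (\<Prod>w\<in>S. ennreal (U w - L w))"
      using nn_integral_PiM_windows_le[OF S] by (rule mult_left_mono) simp
    also have "\<dots> = (\<integral>\<^sup>+y. G (?m y) \<partial>PiM S (\<lambda>_. unif01))"
      unfolding eqG using prob_space.emeasure_space_1[OF prob_space_PiM_unif01[of S]] by simp
    finally show ?thesis .
  qed
  have "(\<integral>\<^sup>+\<sigma>. F \<sigma> \<partial>PiM V (\<lambda>_. unif01)) = (\<integral>\<^sup>+x. (\<integral>\<^sup>+y. F (merge (V - S) S (x, y)) \<partial>PiM S (\<lambda>_. unif01)) \<partial>PiM (V - S) (\<lambda>_. unif01))"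
    using unif01_product.product_nn_integral_fold[OF VS(2) _ S, of F] Fm V VS(1) by simp
  also have "\<dots> \<le> (\<integral>\<^sup>+x. (\<integral>\<^sup>+y. G (merge (V - S) S (x, y)) \<partial>PiM S (\<lambda>_. unif01)) \<partial>PiM (V - S) (\<lambda>_. unif01))"
    by (intro nn_integral_mono Fx)
  also have "\<dots> = (\<integral>\<^sup>+\<sigma>. G \<sigma> \<partial>PiM V (\<lambda>_. unif01))"
    using unif01_product.product_nn_integral_fold[OF VS(2) _ S, of G] Gm V VS(1) by simp
  finally show ?thesis unfolding F_def G_def .
qed

lemma power_add_le_exp:
  fixes D d :: real and m :: nat
  assumes "D > 0" "D + d \<ge> 0"
  shows "(D + d) ^ m \<le> D ^ m * exp (real m * d / D)"
proof -
  have "D + d = D * (1 + d / D)" using assms by (simp add: field_simps)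
  moreover have "(1 + d / D) ^ m \<le> exp (d / D) ^ m"
  proof (rule power_mono)
    show "1 + d / D \<le> exp (d / D)" by (rule exp_ge_add_one_self)
    have "0 \<le> (D + d) / D" using assms by simp
    then show "0 \<le> 1 + d / D" using assms by (simp add: field_simps)
  qed
  moreover have "exp (d / D) ^ m = exp (real m * d / D)" by (simp add: exp_of_nat_mult[symmetric])
  ultimately show ?thesis using assms
    by (metis mult_left_mono power_mult_distrib zero_le_power order_less_le)
qed

text \<open>Bounding each factor by power_add_le_exp, the exponents telescope.\<close>
lemma prod_gap_powers_le_exp:
  fixes b q :: real and y :: "nat \<Rightarrow> real" and m m' k :: nat
  assumes b: "b > 0" and q: "q > 0" and y: "\<And>j. j \<le> k \<Longrightarrow> 0 \<le> y j \<and> y j < q"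
  shows "(\<Prod>j<k. (b + q + y j - y (Suc j)) ^ m) * (b + y k) ^ m'
         \<le> (b + q) ^ (m * k) * b ^ m' * exp (real m / (b + q) * y 0 + (real m' / b - real m / (b + q)) * y k)"
proof -
  define D where "D = b + q"
  have D: "D > 0" using b q by (simp add: D_def)
  have p1: "(\<Prod>j<k. (D + (y j - y (Suc j))) ^ m) \<le> (\<Prod>j<k. D ^ m * exp (real m * (y j - y (Suc j)) / D))"
  proof (rule prod_mono)
    fix j assume "j \<in> {..<k}"
    then have "0 \<le> y (Suc j)" "y (Suc j) < q" "0 \<le> y j" using y by auto
    then have "D + (y j - y (Suc j)) \<ge> 0" unfolding D_def using b by linarith
    then show "0 \<le> (D + (y j - y (Suc j))) ^ m \<and> (D + (y j - y (Suc j))) ^ m \<le> D ^ m * exp (real m * (y j - y (Suc j)) / D)"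
      using power_add_le_exp[OF D] by auto
  qed
  have p2: "(\<Prod>j<k. D ^ m * exp (real m * (y j - y (Suc j)) / D)) = D ^ (m * k) * exp (real m / D * (y 0 - y k))"
  proof -
    have "(\<Prod>j<k. D ^ m * exp (real m * (y j - y (Suc j)) / D)) = D ^ (m * k) * (\<Prod>j<k. exp (real m / D * (y j - y (Suc j))))"
      by (simp add: prod.distrib power_mult)
    also have "(\<Prod>j<k. exp (real m / D * (y j - y (Suc j)))) = exp (\<Sum>j<k. real m / D * (y j - y (Suc j)))"
      by (simp add: exp_sum)
    also have "(\<Sum>j<k. real m / D * (y j - y (Suc j))) = real m / D * (\<Sum>j<k. (y j - y (Suc j)))"
      by (rule sum_distrib_left[symmetric])
    also have "(\<Sum>j<k. (y j - y (Suc j))) = y 0 - y k"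
      by (rule sum_lessThan_telescope')
    finally show ?thesis .
  qed
  have p3: "(b + y k) ^ m' \<le> b ^ m' * exp (real m' * y k / b)"
    using power_add_le_exp[OF b, of "y k" m'] y[of k] b by auto
  have "(\<Prod>j<k. (b + q + y j - y (Suc j)) ^ m) = (\<Prod>j<k. (D + (y j - y (Suc j))) ^ m)"
    by (simp add: D_def add_diff_eq)
  also have "\<dots> \<le> D ^ (m * k) * exp (real m / D * (y 0 - y k))" using p1 p2 by simp
  finally have A: "(\<Prod>j<k. (b + q + y j - y (Suc j)) ^ m) \<le> D ^ (m * k) * exp (real m / D * (y 0 - y k))" .
  have "(\<Prod>j<k. (b + q + y j - y (Suc j)) ^ m) * (b + y k) ^ m'
        \<le> (D ^ (m * k) * exp (real m / D * (y 0 - y k))) * (b ^ m' * exp (real m' * y k / b))"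
    using y[of k] b D by (intro mult_mono A p3) auto
  also have "\<dots> = D ^ (m * k) * b ^ m' * exp (real m / D * (y 0 - y k) + real m' * y k / b)"
    by (simp add: exp_add)
  also have "real m / D * (y 0 - y k) + real m' * y k / b = real m / D * y 0 + (real m' / b - real m / D) * y k"
    by (simp add: algebra_simps)
  finally show ?thesis unfolding D_def .
qed

lemma nn_integral_unif01_exp_window_le_length:
  fixes t q \<alpha> :: real
  assumes "q \<ge> 0" "\<alpha> \<ge> 0"
  shows "(\<integral>\<^sup>+x. ennreal (if x \<in> {t..<t+q} then exp (\<alpha> * (x - t)) else 0) \<partial>unif01) \<le> ennreal (q * exp (\<alpha> * q))"
proof -
  have "(\<integral>\<^sup>+x. ennreal (if x \<in> {t..<t+q} then exp (\<alpha> * (x - t)) else 0) \<partial>unif01)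
      \<le> (\<integral>\<^sup>+x. ennreal (exp (\<alpha> * q)) * indicator {t..<t+q} x \<partial>unif01)"
    using assms by (intro nn_integral_mono) (auto simp: indicator_def intro!: mult_left_mono)
  also have "\<dots> = ennreal (exp (\<alpha> * q)) * emeasure unif01 {t..<t+q}"
    by (rule nn_integral_cmult_indicator) auto
  also have "\<dots> \<le> ennreal (exp (\<alpha> * q)) * ennreal q"
    using emeasure_unif01_Ico_le[of t "t+q"] by (intro mult_left_mono) auto
  also have "\<dots> = ennreal (q * exp (\<alpha> * q))" using assms by (simp add: ennreal_mult' mult.commute)
  finally show ?thesis .
qed

lemma nn_integral_unif01_exp_window_le_inverse:
  fixes t q \<alpha> :: real
  assumes "q \<ge> 0" "\<alpha> > 0"
  shows "(\<integral>\<^sup>+x. ennreal (if x \<in> {t..<t+q} then exp (\<alpha> * (x - t)) else 0) \<partial>unif01) \<le> ennreal (exp (\<alpha> * q) / \<alpha>)"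
proof -
  let ?f = "\<lambda>x. exp (\<alpha> * (x - t))"
  have mf: "(\<lambda>x. ennreal (if x \<in> {t..<t+q} then exp (\<alpha> * (x - t)) else 0)) \<in> borel_measurable borel"
    by measurable
  have "(\<integral>\<^sup>+x. ennreal (if x \<in> {t..<t+q} then exp (\<alpha> * (x - t)) else 0) \<partial>unif01)
      \<le> (\<integral>\<^sup>+x. ennreal (if x \<in> {t..<t+q} then exp (\<alpha> * (x - t)) else 0) * indicator {0..<1} x \<partial>lborel)"
    by (rule nn_integral_unif01_le_lborel[OF mf])
  also have "\<dots> \<le> (\<integral>\<^sup>+x. ennreal (?f x) * indicator {t..t+q} x \<partial>lborel)"
    by (intro nn_integral_mono) (auto simp: indicator_def)
  also have "\<dots> = ennreal (?f (t+q) / \<alpha> - ?f t / \<alpha>)"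
  proof (rule nn_integral_FTC_Icc)
    show "?f \<in> borel_measurable borel" by measurable
    fix x assume "x \<in> {t..t+q}"
    show "((\<lambda>x. ?f x / \<alpha>) has_real_derivative ?f x) (at x)"
      using assms by (auto intro!: derivative_eq_intros simp: field_simps)
    show "0 \<le> ?f x" by simp
  next
    show "t \<le> t + q" using assms by simp
  qed
  also have "\<dots> \<le> ennreal (?f (t+q) / \<alpha>)" using assms by (intro ennreal_leI) simp
  also have "?f (t+q) = exp (\<alpha> * q)" by simp
  finally show ?thesis .
qed

lemma prod_if_first_last:
  fixes A B q :: real
  assumes "1 \<le> k"
  shows "(\<Prod>j\<in>{0..k}. (if j = 0 then A else q) * (if j = k then B else 1)) = A * q ^ k * B"
proof -
  obtain k' where k: "k = Suc k'" using assms by (cases k) auto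
  have "(\<Prod>j\<in>{0..k}. (if j = 0 then A else q) * (if j = k then B else 1))
      = (\<Prod>j\<in>{0..k}. (if j = 0 then A else q)) * (\<Prod>j\<in>{0..k}. (if j = k then B else 1))"
    by (rule prod.distrib)
  also have "(\<Prod>j\<in>{0..k}. (if j = k then B else 1)) = B" by (subst prod.delta) auto
  also have "(\<Prod>j\<in>{0..k}. (if j = 0 then A else q)) = A * q ^ k"
    unfolding k by (subst prod.atLeast0_atMost_Suc_shift) simp
  finally show ?thesis .
qed

lemma nn_integral_PiM_prod_coordinates:
  fixes V :: "'a set" and u :: "nat \<Rightarrow> 'a" and g :: "nat \<Rightarrow> real \<Rightarrow> ennreal"
  assumes V: "finite V" and inj: "inj_on u {0..k}" and uV: "u ` {0..k} \<subseteq> V"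
    and gm: "\<And>j. g j \<in> borel_measurable borel"
  shows "(\<integral>\<^sup>+\<sigma>. (\<Prod>j\<in>{0..k}. g j (\<sigma> (u j))) \<partial>PiM V (\<lambda>_. unif01)) = (\<Prod>j\<in>{0..k}. \<integral>\<^sup>+x. g j x \<partial>unif01)"
proof -
  interpret unif01_product: product_prob_space "\<lambda>_::'a. unif01" by (rule product_prob_space_unif01)
  define T where "T = u ` {0..k}"
  define G where "G w = (if w \<in> T then g (inv_into {0..k} u w) else (\<lambda>_. 1))" for w
  have GT: "(\<Prod>w\<in>T. f w) = (\<Prod>j\<in>{0..k}. f (u j))" for f :: "'a \<Rightarrow> ennreal"
    unfolding T_def by (rule prod.reindex[OF inj, unfolded comp_def])
  have Gu: "G (u j) = g j" if "j \<in> {0..k}" for j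
    using that inj by (simp add: G_def T_def)
  have eq1: "(\<Prod>j\<in>{0..k}. g j (\<sigma> (u j))) = (\<Prod>w\<in>V. G w (\<sigma> w))" for \<sigma> :: "'a \<Rightarrow> real"
  proof -
    have "(\<Prod>j\<in>{0..k}. g j (\<sigma> (u j))) = (\<Prod>w\<in>T. G w (\<sigma> w))"
      unfolding GT using Gu by (intro prod.cong) auto
    also have "\<dots> = (\<Prod>w\<in>V. G w (\<sigma> w))"
      using uV V by (intro prod.mono_neutral_left) (auto simp: G_def T_def)
    finally show ?thesis .
  qed
  have Gm: "G w \<in> borel_measurable unif01" for w
    using gm unfolding G_def by (auto simp: measurable_def)
  have "(\<integral>\<^sup>+\<sigma>. (\<Prod>j\<in>{0..k}. g j (\<sigma> (u j))) \<partial>PiM V (\<lambda>_. unif01)) = (\<integral>\<^sup>+\<sigma>. (\<Prod>w\<in>V. G w (\<sigma> w)) \<partial>PiM V (\<lambda>_. unif01))"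
    unfolding eq1 ..
  also have "\<dots> = (\<Prod>w\<in>V. integral\<^sup>N unif01 (G w))"
    by (rule unif01_product.product_nn_integral_prod[OF V]) (use Gm in auto)
  also have "\<dots> = (\<Prod>w\<in>T. integral\<^sup>N unif01 (G w))"
  proof (rule prod.mono_neutral_right[OF V])
    show "T \<subseteq> V" using uV by (simp add: T_def)
    show "\<forall>w\<in>V - T. integral\<^sup>N unif01 (G w) = 1"
      using prob_space.emeasure_space_1[OF prob_space_unif01] by (auto simp: G_def)
  qed
  also have "\<dots> = (\<Prod>j\<in>{0..k}. integral\<^sup>N unif01 (G (u j)))" by (rule GT)
  also have "\<dots> = (\<Prod>j\<in>{0..k}. \<integral>\<^sup>+x. g j x \<partial>unif01)" using Gu by (intro prod.cong) auto
  finally show ?thesis .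
qed

lemma (in prob_space) prob_all_below_ge:
  assumes "finite I" and integrable: "\<And>i. i \<in> I \<Longrightarrow> integrable M (X i)"
    and nonneg: "\<And>i x. i \<in> I \<Longrightarrow> 0 \<le> X i x"
    and expectation: "\<And>i. i \<in> I \<Longrightarrow> expectation (X i) \<le> a" and "0 < c"
  shows "1 - real (card I) * a / c \<le> prob {x \<in> space M. \<forall>i\<in>I. X i x \<le> c}"
proof -
  have meas: "X i \<in> borel_measurable M" if "i \<in> I" for i using integrable[OF that] by simp
  define bad where "bad = (\<Union>i\<in>I. {x \<in> space M. c \<le> X i x})"
  have bad_sets: "{x \<in> space M. c \<le> X i x} \<in> events" if "i \<in> I" for i
    using meas[OF that] by measurable
  have "prob bad \<le> (\<Sum>i\<in>I. prob {x \<in> space M. c \<le> X i x})"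
    unfolding bad_def using bad_sets \<open>finite I\<close> by (intro finite_measure_subadditive_finite) auto
  also have "\<dots> \<le> (\<Sum>i\<in>I. a / c)"
  proof (rule sum_mono)
    fix i assume i: "i \<in> I"
    have "prob {x \<in> space M. c \<le> X i x} \<le> expectation (X i) / c"
      using integral_Markov_inequality_measure[OF integrable[OF i] _ _ \<open>0 < c\<close>, of "space M"] nonneg i
      by auto
    also have "\<dots> \<le> a / c" using expectation[OF i] \<open>0 < c\<close> by (simp add: divide_right_mono)
    finally show "prob {x \<in> space M. c \<le> X i x} \<le> a / c" .
  qed
  finally have "prob bad \<le> real (card I) * a / c" by simp
  moreover have "bad \<in> events" unfolding bad_def using bad_sets \<open>finite I\<close> by auto
  ultimately have "1 - real (card I) * a / c \<le> prob (space M - bad)"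
    using prob_compl by simp
  also have "\<dots> \<le> prob {x \<in> space M. \<forall>i\<in>I. X i x \<le> c}"
    using meas \<open>finite I\<close> by (intro finite_measure_mono) (auto simp: bad_def not_le less_imp_le)
  finally show ?thesis .
qed

lemma measurable_BigDelta_coordinate: "Measurable.pred (PiM V (\<lambda>_. unif01)) (\<lambda>\<sigma>. \<sigma> v \<in> BigDelta n r j)"
  by (rule pred_sets2[OF _ measurable_coordinate]) (simp add: BigDelta_eq)

lemma measurable_SmallDelta_coordinate: "Measurable.pred (PiM V (\<lambda>_. unif01)) (\<lambda>\<sigma>. \<sigma> v \<in> SmallDelta n r j)"
  by (rule pred_sets2[OF _ measurable_coordinate]) (simp add: SmallDelta_eq)

lemma measurable_coordinate_less: "Measurable.pred (PiM V (\<lambda>_. unif01)) (\<lambda>\<sigma>. \<sigma> u < \<sigma> v)"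
  using measurable_coordinate[of u V] measurable_coordinate[of v V] by measurable

lemma measurable_alg1_iter:
  assumes E: "finite E" "\<forall>e\<in>E. finite e"
  shows "(\<lambda>\<sigma>. alg1_iter n r E \<sigma> k v) \<in> measurable (PiM V (\<lambda>_. unif01)) (count_space UNIV)"
proof (induction k arbitrary: v)
  case 0 then show ?case by simp
next
  case (Suc k)
  note IH[measurable] = Suc.IH
  note [measurable] = measurable_BigDelta_coordinate measurable_SmallDelta_coordinate measurable_coordinate_less
  have Q: "Measurable.pred (PiM V (\<lambda>_. unif01)) (\<lambda>\<sigma>. \<exists>e\<in>E. v \<in> e \<and>
                 (\<forall>u\<in>e - {v}. ((\<exists>j\<in>{1..r}. \<sigma> u \<in> BigDelta n r j) \<or> \<sigma> u < \<sigma> v)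
                                 \<and> alg1_iter n r E \<sigma> k u = i))" for i
  proof (intro pred_intros_finite(4) E(1))
    fix e assume "e \<in> E"
    then have fe: "finite (e - {v})" using E by auto
    show "Measurable.pred (PiM V (\<lambda>_. unif01)) (\<lambda>\<sigma>. v \<in> e \<and>
                 (\<forall>u\<in>e - {v}. ((\<exists>j\<in>{1..r}. \<sigma> u \<in> BigDelta n r j) \<or> \<sigma> u < \<sigma> v)
                                 \<and> alg1_iter n r E \<sigma> k u = i))"
      by (intro pred_intros_conj1' pred_intros_finite(3) fe) measurable
  qed
  have Q2: "Measurable.pred (PiM V (\<lambda>_. unif01)) (\<lambda>\<sigma>. \<exists>e\<in>E. v \<in> e \<and>
                 (\<forall>u\<in>e - {v}. ((\<exists>j\<in>{1..r}. \<sigma> u \<in> BigDelta n r j) \<or> \<sigma> u < \<sigma> v)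
                                 \<and> alg1_iter n r E \<sigma> k u = (LEAST i. i \<in> {1..<r} \<and> \<sigma> v \<in> SmallDelta n r i)))"
  proof -
    have eq: "(\<lambda>\<sigma>. \<exists>e\<in>E. v \<in> e \<and>
                 (\<forall>u\<in>e - {v}. ((\<exists>j\<in>{1..r}. \<sigma> u \<in> BigDelta n r j) \<or> \<sigma> u < \<sigma> v)
                                 \<and> alg1_iter n r E \<sigma> k u = (LEAST i. i \<in> {1..<r} \<and> \<sigma> v \<in> SmallDelta n r i)))
      = (\<lambda>\<sigma>. \<exists>i::nat. (LEAST i. i \<in> {1..<r} \<and> \<sigma> v \<in> SmallDelta n r i) = i \<and> (\<exists>e\<in>E. v \<in> e \<and>
                 (\<forall>u\<in>e - {v}. ((\<exists>j\<in>{1..r}. \<sigma> u \<in> BigDelta n r j) \<or> \<sigma> u < \<sigma> v)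
                                 \<and> alg1_iter n r E \<sigma> k u = i)))"
      by auto
    show ?thesis unfolding eq using Q by measurable
  qed
  show ?case
    unfolding alg1_iter.simps Let_def using Q2 by measurable
qed

lemma measurable_Xcnt:
  assumes V: "finite V" and E: "finite E" "\<forall>e\<in>E. finite e"
  shows "(\<lambda>\<sigma>. real (Xcnt n r V E i \<sigma>)) \<in> borel_measurable (PiM V (\<lambda>_. unif01))"
proof -
  have eq: "real (Xcnt n r V E i \<sigma>) = (\<Sum>v\<in>V. if \<sigma> v \<in> SmallDelta n r i \<and> C0 n r V E \<sigma> v = i + 1 then 1 else 0)" for \<sigma>
    unfolding Xcnt_def using V by (simp add: sum.If_cases Int_def)
  note [measurable] = measurable_alg1_iter[OF E] measurable_SmallDelta_coordinate
  show ?thesis unfolding eq C0_def by measurable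
qed

section \<open>The probability of a witness chain\<close>

definition chain_free :: "(nat \<Rightarrow> 'a set) \<Rightarrow> 'a \<Rightarrow> nat \<Rightarrow> nat \<Rightarrow> 'a set" where
  "chain_free es v k j =
     (if j < k then es j - {chain_vertex es v j, chain_vertex es v (Suc j)}
      else es k - {chain_vertex es v k})"

definition chain_floor :: "nat \<Rightarrow> nat \<Rightarrow> nat \<Rightarrow> nat \<Rightarrow> (nat \<Rightarrow> 'a) \<Rightarrow> nat \<Rightarrow> ('a \<Rightarrow> real) \<Rightarrow> real" where
  "chain_floor n r i k u j \<sigma> = (if j < k then \<sigma> (u (Suc j)) else block_start n r (i - k))"

lemma witness_chain_free_window:
  assumes "witness_chain n r E i k es v \<sigma>" "j \<le> k" "w \<in> chain_free es v k j"
  shows "chain_floor n r i k (chain_vertex es v) j \<sigma> \<le> \<sigma> w \<and> \<sigma> w < \<sigma> (chain_vertex es v j)"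
  using assms unfolding witness_chain_def chain_free_def chain_floor_def
  by (cases "j < k") auto

lemma witness_chain_shape:
  fixes V :: "'a set"
  assumes valid: "valid_params n r" and n: "3 \<le> n" and uniform: "\<forall>e\<in>E. e \<subseteq> V \<and> card e = n"
    and chain: "witness_chain n r E i k es v \<sigma>" and "k < i"
  defines "u \<equiv> chain_vertex es v" and "S \<equiv> chain_free es v k"
  shows "inj_on u {0..k}" and "u ` {0..k} \<subseteq> V"
    and "\<And>j. j \<le> k \<Longrightarrow> S j \<subseteq> V"
    and "\<And>j. j \<le> k \<Longrightarrow> card (S j) = (if j < k then n - 2 else n - 1)"
    and "\<And>j j'. j \<le> k \<Longrightarrow> j' \<le> k \<Longrightarrow> j \<noteq> j' \<Longrightarrow> S j \<inter> S j' = {}"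
    and "\<And>j m. j \<le> k \<Longrightarrow> m \<le> k \<Longrightarrow> u m \<notin> S j"
proof -
  have edge: "es j \<in> E \<and> u j \<in> es j \<and> \<sigma> (u j) \<in> SmallDelta n r (i - j)" if "j \<le> k" for j
    using chain that unfolding witness_chain_def u_def by blast
  have link: "u (Suc j) \<in> es j" if "j < k" for j
    using chain that unfolding witness_chain_def u_def by blast
  have window: "chain_floor n r i k u j \<sigma> \<le> \<sigma> w \<and> \<sigma> w < \<sigma> (u j)" if "j \<le> k" "w \<in> S j" for j w
    using witness_chain_free_window[OF chain that(1)] that(2) unfolding u_def S_def by blast
  have decreasing: "\<sigma> (u j') < \<sigma> (u j)" if "j < j'" "j' \<le> k" for j j'
    using SmallDelta_less[OF valid, of "\<sigma> (u j')" "i - j'" "\<sigma> (u j)" "i - j"] edge[of j] edge[of j']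
      that \<open>k < i\<close> by auto
  have floor_ge: "\<sigma> (u j') \<le> chain_floor n r i k u j \<sigma>" if "j < j'" "j' \<le> k" for j j'
    using decreasing[of "Suc j" j'] that by (cases "Suc j = j'") (auto simp: chain_floor_def)
  show "inj_on u {0..k}"
    by (rule inj_onI) (metis atLeastAtMost_iff decreasing linorder_neqE_nat order_less_irrefl)
  show "u ` {0..k} \<subseteq> V" using edge uniform by fastforce
  show "S j \<subseteq> V" if "j \<le> k" for j
    using edge[OF that] edge[of k] uniform by (auto simp: S_def chain_free_def)
  show "card (S j) = (if j < k then n - 2 else n - 1)" if "j \<le> k" for j
  proof -
    have card: "card (es j) = n" using edge[OF that] uniform by blast
    then have "finite (es j)" using n by (intro card_ge_0_finite) simp
    moreover note card
    moreover have "u j \<noteq> u (Suc j)" if "j < k" using decreasing[of j "Suc j"] that by auto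
    ultimately show ?thesis
      using edge[OF that] link that by (auto simp: S_def chain_free_def u_def[symmetric] card_Diff_subset)
  qed
  show "S j \<inter> S j' = {}" if "j \<le> k" "j' \<le> k" "j \<noteq> j'" for j j'
  proof -
    have "w \<notin> S j'" if "j < j'" "j' \<le> k" "w \<in> S j" for j j' w
      using window[of j' w] window[of j w] floor_ge[of j j'] that by fastforce
    then show ?thesis using that by (cases j j' rule: linorder_cases) auto
  qed
  show "u m \<notin> S j" if "j \<le> k" "m \<le> k" for j m
  proof
    assume um: "u m \<in> S j"
    consider "m < j" | "m = j" | "m = Suc j" | "Suc j < m" by linarith
    then show False
    proof cases
      case 1 then show False using window[OF that(1) um] decreasing[of m j] that by auto
    next
      case 4 then show False using window[OF that(1) um] decreasing[of "Suc j" m] that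
        by (auto simp: chain_floor_def)
    qed (use um that in \<open>auto simp: S_def chain_free_def u_def split: if_splits\<close>)
  qed
qed

definition chain_in_SmallDeltas :: "nat \<Rightarrow> nat \<Rightarrow> nat \<Rightarrow> nat \<Rightarrow> (nat \<Rightarrow> 'a) \<Rightarrow> ('a \<Rightarrow> real) \<Rightarrow> ennreal" where
  "chain_in_SmallDeltas n r i k u \<sigma> =
     (\<Prod>j\<in>{0..k}. if \<sigma> (u j) \<in> SmallDelta n r (i - j) then 1 else 0)"

definition chain_dominator ::
    "nat \<Rightarrow> nat \<Rightarrow> nat \<Rightarrow> nat \<Rightarrow> (nat \<Rightarrow> 'a set) \<Rightarrow> 'a \<Rightarrow> ('a \<Rightarrow> real) \<Rightarrow> ennreal" where
  "chain_dominator n r i k es v \<sigma> =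
     chain_in_SmallDeltas n r i k (chain_vertex es v) \<sigma> *
     (\<Prod>j\<in>{0..k}. \<Prod>w\<in>chain_free es v k j.
        if chain_floor n r i k (chain_vertex es v) j \<sigma> \<le> \<sigma> w \<and> \<sigma> w < \<sigma> (chain_vertex es v j)
        then 1 else 0)"

lemma witness_chain_dominator:
  assumes "witness_chain n r E i k es v \<sigma>"
  shows "chain_dominator n r i k es v \<sigma> = 1"
proof -
  have "chain_in_SmallDeltas n r i k (chain_vertex es v) \<sigma> = 1"
    using assms unfolding chain_in_SmallDeltas_def witness_chain_def by (intro prod.neutral) auto
  then show ?thesis
    unfolding chain_dominator_def using witness_chain_free_window[OF assms]
    by (simp add: prod.neutral)
qed

lemma measurable_chain_in_SmallDeltas [measurable]:
  "chain_in_SmallDeltas n r i k u \<in> borel_measurable (PiM V (\<lambda>_. unif01))"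
  unfolding chain_in_SmallDeltas_def SmallDelta_eq using measurable_coordinate by measurable

lemma measurable_chain_floor [measurable]:
  "chain_floor n r i k u j \<in> borel_measurable (PiM V (\<lambda>_. unif01))"
  unfolding chain_floor_def using measurable_coordinate by measurable

lemma measurable_chain_dominator:
  "chain_dominator n r i k es v \<in> borel_measurable (PiM V (\<lambda>_. unif01))"
  unfolding chain_dominator_def
  by (intro borel_measurable_times_ennreal borel_measurable_prod_ennreal measurable_window_indicator
      measurable_chain_in_SmallDeltas measurable_chain_floor measurable_coordinate)

text \<open>Integrating out the free vertices of the chain: each of them is confined to a window
  determined by the chain vertices alone.\<close>
lemma nn_integral_chain_dominator_le_gaps:
  fixes V :: "'a set"
  assumes valid: "valid_params n r" and n: "3 \<le> n" and V: "finite V"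
    and uniform: "\<forall>e\<in>E. e \<subseteq> V \<and> card e = n"
    and chain: "witness_chain n r E i k es v \<sigma>\<^sub>0" and "k < i"
  defines "u \<equiv> chain_vertex es v"
  shows "(\<integral>\<^sup>+\<sigma>. chain_dominator n r i k es v \<sigma> \<partial>PiM V (\<lambda>_. unif01))
    \<le> (\<integral>\<^sup>+\<sigma>. chain_in_SmallDeltas n r i k u \<sigma> *
          (\<Prod>j\<in>{0..k}. ennreal (\<sigma> (u j) - chain_floor n r i k u j \<sigma>) ^ (if j < k then n - 2 else n - 1))
        \<partial>PiM V (\<lambda>_. unif01))"
proof -
  define S where "S = chain_free es v k"
  note shape = witness_chain_shape[OF valid n uniform chain \<open>k < i\<close>, folded u_def S_def]
  define free where "free = (\<Union>j\<in>{0..k}. S j)"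
  define lev where "lev w = (LEAST j. j \<le> k \<and> w \<in> S j)" for w
  have lev: "lev w = j" if "j \<le> k" "w \<in> S j" for w j
    unfolding lev_def by (rule Least_equality) (use that shape(5) in \<open>force+\<close>)
  have S_fin: "finite (S j)" if "j \<le> k" for j using shape(3)[OF that] V finite_subset by blast
  have regroup: "(\<Prod>w\<in>free. f (lev w) w) = (\<Prod>j\<in>{0..k}. \<Prod>w\<in>S j. f j w)" for f :: "nat \<Rightarrow> 'a \<Rightarrow> ennreal"
    unfolding free_def using S_fin shape(5) lev
    by (subst prod.UNION_disjoint) (auto intro!: prod.cong)
  define lo where "lo w = chain_floor n r i k u (lev w)" for w
  define hi where "hi w \<sigma> = \<sigma> (u (lev w))" for w and \<sigma> :: "'a \<Rightarrow> real"
  have windows: "(\<Prod>w\<in>free. if lo w \<sigma> \<le> \<sigma> w \<and> \<sigma> w < hi w \<sigma> then 1 else 0 :: ennreal) =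
      (\<Prod>j\<in>{0..k}. \<Prod>w\<in>S j. if chain_floor n r i k u j \<sigma> \<le> \<sigma> w \<and> \<sigma> w < \<sigma> (u j) then 1 else 0)"
    for \<sigma>
    using regroup[of "\<lambda>j w. if chain_floor n r i k u j \<sigma> \<le> \<sigma> w \<and> \<sigma> w < \<sigma> (u j) then 1 else 0"]
    by (simp add: lo_def hi_def)
  have gaps: "(\<Prod>w\<in>free. ennreal (hi w \<sigma> - lo w \<sigma>)) =
      (\<Prod>j\<in>{0..k}. ennreal (\<sigma> (u j) - chain_floor n r i k u j \<sigma>) ^ (if j < k then n - 2 else n - 1))"
    for \<sigma>
    using regroup[of "\<lambda>j w. ennreal (\<sigma> (u j) - chain_floor n r i k u j \<sigma>)"] shape(4) S_fin
    by (simp add: lo_def hi_def)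
  have "(\<integral>\<^sup>+\<sigma>. chain_dominator n r i k es v \<sigma> \<partial>PiM V (\<lambda>_. unif01))
      = (\<integral>\<^sup>+\<sigma>. chain_in_SmallDeltas n r i k u \<sigma> *
           (\<Prod>w\<in>free. if lo w \<sigma> \<le> \<sigma> w \<and> \<sigma> w < hi w \<sigma> then 1 else 0) \<partial>PiM V (\<lambda>_. unif01))"
    unfolding windows chain_dominator_def by (simp add: u_def S_def)
  also have "\<dots> \<le> (\<integral>\<^sup>+\<sigma>. chain_in_SmallDeltas n r i k u \<sigma> *
           (\<Prod>w\<in>free. ennreal (hi w \<sigma> - lo w \<sigma>)) \<partial>PiM V (\<lambda>_. unif01))"
  proof (rule nn_integral_PiM_window_indicators_le[OF V])
    show "free \<subseteq> V" using shape(3) by (fastforce simp: free_def)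
    fix \<sigma> \<sigma>' :: "'a \<Rightarrow> real" assume agree: "\<forall>x\<in>V - free. \<sigma> x = \<sigma>' x"
    have "u j \<in> V - free" if "j \<le> k" for j
      using shape(2,6) that by (fastforce simp: free_def)
    then have "\<sigma> (u j) = \<sigma>' (u j)" if "j \<le> k" for j
      using agree that by blast
    then show "chain_in_SmallDeltas n r i k u \<sigma> = chain_in_SmallDeltas n r i k u \<sigma>' \<and>
        (\<forall>w\<in>free. lo w \<sigma> = lo w \<sigma>' \<and> hi w \<sigma> = hi w \<sigma>')"
      unfolding chain_in_SmallDeltas_def lo_def hi_def chain_floor_def free_def using lev
      by (auto intro!: prod.cong)
  qed (auto simp: lo_def hi_def intro: measurable_coordinate)
  also have "\<dots> = (\<integral>\<^sup>+\<sigma>. chain_in_SmallDeltas n r i k u \<sigma> *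
          (\<Prod>j\<in>{0..k}. ennreal (\<sigma> (u j) - chain_floor n r i k u j \<sigma>) ^ (if j < k then n - 2 else n - 1))
        \<partial>PiM V (\<lambda>_. unif01))"
    unfolding gaps ..
  finally show ?thesis .
qed

text \<open>The exponents left over by prod_gap_powers_le_exp: after telescoping, only the offsets
  of the first and the last chain vertex inside their delta-intervals remain.\<close>
definition chain_exponent :: "nat \<Rightarrow> nat \<Rightarrow> nat \<Rightarrow> nat \<Rightarrow> real" where
  "chain_exponent n r k j =
     (if j = 0 then real (n - 2) / period n r else 0) +
     (if j = k then real (n - 1) / big_len n r - real (n - 2) / period n r else 0)"

definition chain_weight :: "nat \<Rightarrow> nat \<Rightarrow> nat \<Rightarrow> nat \<Rightarrow> nat \<Rightarrow> real \<Rightarrow> ennreal" where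
  "chain_weight n r i k j x =
     ennreal (if x \<in> SmallDelta n r (i - j)
              then exp (chain_exponent n r k j * (x - (block_start n r (i - j) + big_len n r))) else 0)"

lemma nn_integral_chain_weight_le:
  assumes valid: "valid_params n r" and nonneg: "0 \<le> chain_exponent n r k j"
  defines "\<alpha> \<equiv> chain_exponent n r k j" and "q \<equiv> small_len n r"
  shows "(\<integral>\<^sup>+x. chain_weight n r i k j x \<partial>unif01) \<le> ennreal (q * exp (\<alpha> * q))"
    and "0 < \<alpha> \<Longrightarrow> (\<integral>\<^sup>+x. chain_weight n r i k j x \<partial>unif01) \<le> ennreal (exp (\<alpha> * q) / \<alpha>)"
proof -
  define t where "t = block_start n r (i - j) + big_len n r"
  have q: "0 < q" using valid_params_pos[OF valid] by (simp add: q_def)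
  have "chain_weight n r i k j = (\<lambda>x. ennreal (if x \<in> {t..<t + q} then exp (\<alpha> * (x - t)) else 0))"
    unfolding chain_weight_def SmallDelta_eq by (auto simp: t_def \<alpha>_def q_def period_def add.assoc)
  then show "(\<integral>\<^sup>+x. chain_weight n r i k j x \<partial>unif01) \<le> ennreal (q * exp (\<alpha> * q))"
    and "0 < \<alpha> \<Longrightarrow> (\<integral>\<^sup>+x. chain_weight n r i k j x \<partial>unif01) \<le> ennreal (exp (\<alpha> * q) / \<alpha>)"
    using nn_integral_unif01_exp_window_le_length[of q \<alpha> t]
      nn_integral_unif01_exp_window_le_inverse[of q \<alpha> t] q nonneg by (auto simp: \<alpha>_def)
qed

lemma prod_nn_integral_chain_weight_le:
  assumes valid: "valid_params n r" and n: "n \<ge> 3"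
  defines "b \<equiv> big_len n r" and "q \<equiv> small_len n r"
  shows "(\<Prod>j\<in>{0..k}. \<integral>\<^sup>+x. chain_weight n r i k j x \<partial>unif01)
    \<le> ennreal (q ^ k * exp (real (n - 1) * q / b) * (b + q) / real (n - 2))"
proof -
  have b: "b > 0" and q: "q > 0" using valid_params_pos[OF valid] by (simp_all add: b_def q_def)
  define c where "c = real (n - 2) / (b + q)"
  define c2 where "c2 = real (n - 1) / b - c"
  have exponent: "chain_exponent n r k j = (if j = 0 then c else 0) + (if j = k then c2 else 0)" for j
    by (simp add: chain_exponent_def c_def c2_def b_def q_def period_def)
  have c: "c > 0" using n b q by (simp add: c_def)
  have "real (n - 2) / (b + q) \<le> real (n - 1) / b"
    using b q n by (intro frac_le) auto
  then have c2: "c2 \<ge> 0" by (simp add: c_def c2_def)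
  have csum: "c + c2 = real (n - 1) / b" by (simp add: c2_def)
  note weight_le = nn_integral_chain_weight_le[OF valid, of k _ i, unfolded exponent, folded q_def]
  show ?thesis
  proof (cases "k = 0")
    case True
    have "(\<Prod>j\<in>{0..k}. \<integral>\<^sup>+x. chain_weight n r i k j x \<partial>unif01) = (\<integral>\<^sup>+x. chain_weight n r i k 0 x \<partial>unif01)"
      using True by simp
    also have "\<dots> \<le> ennreal (exp ((c + c2) * q) / (c + c2))"
      using weight_le(2)[of 0] True c c2 by simp
    also have "\<dots> \<le> ennreal (q ^ k * exp (real (n - 1) * q / b) * (b + q) / real (n - 2))"
    proof (rule ennreal_leI)
      have "1 / (c + c2) = b / real (n - 1)" using csum by simp
      also have "\<dots> \<le> (b + q) / real (n - 2)" using b q n by (intro frac_le) auto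
      finally have "exp ((c + c2) * q) * (1 / (c + c2)) \<le> exp ((c + c2) * q) * ((b + q) / real (n - 2))"
        by (intro mult_left_mono) auto
      then show "exp ((c + c2) * q) / (c + c2) \<le> q ^ k * exp (real (n - 1) * q / b) * (b + q) / real (n - 2)"
        using True csum by simp
    qed
    finally show ?thesis .
  next
    case False
    define f where "f j = (if j = 0 then exp (c * q) / c else q) * (if j = k then exp (c2 * q) else 1)" for j
    have "(\<Prod>j\<in>{0..k}. \<integral>\<^sup>+x. chain_weight n r i k j x \<partial>unif01) \<le> (\<Prod>j\<in>{0..k}. ennreal (f j))"
    proof (rule prod_mono_ennreal)
      fix j assume "j \<in> {0..k}"
      then consider "j = 0" | "j = k" | "0 < j" "j < k" by fastforce
      then show "(\<integral>\<^sup>+x. chain_weight n r i k j x \<partial>unif01) \<le> ennreal (f j)"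
        by cases (use weight_le[of j] False c c2 in \<open>auto simp: f_def\<close>)
    qed
    also have "\<dots> = ennreal (\<Prod>j\<in>{0..k}. f j)"
      using c q by (intro prod_ennreal) (simp add: f_def)
    also have "(\<Prod>j\<in>{0..k}. f j) = exp (c * q) / c * q ^ k * exp (c2 * q)"
      unfolding f_def using False by (intro prod_if_first_last) auto
    also have "\<dots> = q ^ k * exp ((c + c2) * q) * (1 / c)"
      by (simp add: exp_add distrib_right)
    also have "\<dots> = q ^ k * exp (real (n - 1) * q / b) * (b + q) / real (n - 2)"
      using csum by (simp add: c_def)
    finally show ?thesis .
  qed
qed

lemma chain_gap_powers_le_weights:
  assumes valid: "valid_params n r" and "k < i"
  defines "b \<equiv> big_len n r" and "q \<equiv> small_len n r"
  shows "chain_in_SmallDeltas n r i k u \<sigma> *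
      (\<Prod>j\<in>{0..k}. ennreal (\<sigma> (u j) - chain_floor n r i k u j \<sigma>) ^ (if j < k then n - 2 else n - 1))
    \<le> ennreal ((b + q) ^ ((n - 2) * k) * b ^ (n - 1)) * (\<Prod>j\<in>{0..k}. chain_weight n r i k j (\<sigma> (u j)))"
proof (cases "\<forall>j\<le>k. \<sigma> (u j) \<in> SmallDelta n r (i - j)")
  case False
  then have "chain_in_SmallDeltas n r i k u \<sigma> = 0"
    unfolding chain_in_SmallDeltas_def by (auto intro!: prod_zero)
  then show ?thesis by simp
next
  case True
  have b: "b > 0" and q: "q > 0" using valid_params_pos[OF valid] by (simp_all add: b_def q_def)
  define gap where "gap j = \<sigma> (u j) - chain_floor n r i k u j \<sigma>" for j
  define y where "y j = \<sigma> (u j) - (block_start n r (i - j) + b)" for j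
  define c where "c = real (n - 2) / (b + q)"
  define c2 where "c2 = real (n - 1) / b - c"
  have y: "0 \<le> y j \<and> y j < q" if "j \<le> k" for j
    using True that by (auto simp: y_def SmallDelta_eq b_def q_def period_def)
  have gap_inner: "gap j = b + q + y j - y (Suc j)" if "j < k" for j
  proof -
    have "block_start n r (i - j) - block_start n r (i - Suc j) = b + q"
      using that \<open>k < i\<close> block_start_diff[of n r "i - j" "i - Suc j"]
      by (simp add: of_nat_diff b_def q_def period_def)
    then show ?thesis using that by (simp add: gap_def y_def chain_floor_def)
  qed
  have gap_last: "gap k = b + y k" by (simp add: gap_def y_def chain_floor_def)
  have gap_nonneg: "0 \<le> gap j" if "j \<le> k" for j
    using that gap_inner gap_last y[of j] y[of "Suc j"] b by (cases "j < k") auto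
  have "(\<Prod>j\<in>{0..k}. ennreal (gap j) ^ (if j < k then n - 2 else n - 1))
      = ennreal ((\<Prod>j<k. gap j ^ (n - 2)) * gap k ^ (n - 1))"
  proof -
    have "(\<Prod>j<k. ennreal (gap j) ^ (n - 2)) = (\<Prod>j<k. ennreal (gap j ^ (n - 2)))"
      using gap_nonneg by (intro prod.cong refl) (simp add: ennreal_power)
    also have "\<dots> = ennreal (\<Prod>j<k. gap j ^ (n - 2))"
      using gap_nonneg by (intro prod_ennreal) simp
    finally have "(\<Prod>j<k. ennreal (gap j) ^ (n - 2)) = ennreal (\<Prod>j<k. gap j ^ (n - 2))" .
    moreover have "(\<Prod>j<k. gap j ^ (n - 2)) \<ge> 0" using gap_nonneg by (intro prod_nonneg) simp
    ultimately show ?thesis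
      using gap_nonneg[of k]
      by (simp add: atLeast0AtMost lessThan_Suc_atMost[symmetric] ennreal_power ennreal_mult)
  qed
  also have "(\<Prod>j<k. gap j ^ (n - 2)) * gap k ^ (n - 1)
      = (\<Prod>j<k. (b + q + y j - y (Suc j)) ^ (n - 2)) * (b + y k) ^ (n - 1)"
    using gap_inner gap_last by simp
  also have "\<dots> \<le> (b + q) ^ ((n - 2) * k) * b ^ (n - 1) * exp (c * y 0 + c2 * y k)"
    using prod_gap_powers_le_exp[OF b q y] by (simp add: c_def c2_def)
  also have "exp (c * y 0 + c2 * y k) = (\<Prod>j\<in>{0..k}. exp (chain_exponent n r k j * y j))"
  proof -
    have exponent: "chain_exponent n r k j = (if j = 0 then c else 0) + (if j = k then c2 else 0)" for j
      by (simp add: chain_exponent_def c_def c2_def b_def q_def period_def)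
    have "(\<Sum>j\<in>{0..k}. chain_exponent n r k j * y j)
        = (\<Sum>j\<in>{0..k}. if j = 0 then c * y j else 0) + (\<Sum>j\<in>{0..k}. if j = k then c2 * y j else 0)"
      unfolding sum.distrib[symmetric] exponent by (intro sum.cong refl) (simp add: distrib_right)
    also have "\<dots> = c * y 0 + c2 * y k" by (simp add: sum.delta)
    finally show ?thesis by (simp add: exp_sum[symmetric])
  qed
  finally have "(\<Prod>j\<in>{0..k}. ennreal (gap j) ^ (if j < k then n - 2 else n - 1))
      \<le> ennreal ((b + q) ^ ((n - 2) * k) * b ^ (n - 1) * (\<Prod>j\<in>{0..k}. exp (chain_exponent n r k j * y j)))"
    by (simp add: ennreal_leI)
  moreover have "chain_in_SmallDeltas n r i k u \<sigma> = 1"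
    using True unfolding chain_in_SmallDeltas_def by (intro prod.neutral) auto
  moreover have "(\<Prod>j\<in>{0..k}. chain_weight n r i k j (\<sigma> (u j)))
      = ennreal (\<Prod>j\<in>{0..k}. exp (chain_exponent n r k j * y j))"
  proof -
    have "(\<Prod>j\<in>{0..k}. chain_weight n r i k j (\<sigma> (u j)))
        = (\<Prod>j\<in>{0..k}. ennreal (exp (chain_exponent n r k j * y j)))"
      using True by (intro prod.cong refl) (simp add: chain_weight_def y_def b_def)
    also have "\<dots> = ennreal (\<Prod>j\<in>{0..k}. exp (chain_exponent n r k j * y j))"
      by (intro prod_ennreal) simp
    finally show ?thesis .
  qed
  moreover have "ennreal ((b + q) ^ ((n - 2) * k) * b ^ (n - 1) * (\<Prod>j\<in>{0..k}. exp (chain_exponent n r k j * y j)))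
      = ennreal ((b + q) ^ ((n - 2) * k) * b ^ (n - 1)) * ennreal (\<Prod>j\<in>{0..k}. exp (chain_exponent n r k j * y j))"
    using b q by (intro ennreal_mult) (auto intro: prod_nonneg)
  ultimately show ?thesis by (simp add: gap_def)
qed

definition chain_prob_bound :: "nat \<Rightarrow> nat \<Rightarrow> nat \<Rightarrow> real" where
  "chain_prob_bound n r k =
     period n r ^ ((n - 2) * k) * big_len n r ^ (n - 1) * small_len n r ^ k
     * exp (real (n - 1) * small_len n r / big_len n r) * period n r / real (n - 2)"

lemma chain_prob_bound_nonneg: "valid_params n r \<Longrightarrow> 0 \<le> chain_prob_bound n r k"
  using valid_params_pos[of n r] by (simp add: chain_prob_bound_def)

lemma nn_integral_chain_gaps_le:
  fixes V :: "'a set" and u :: "nat \<Rightarrow> 'a"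
  assumes valid: "valid_params n r" and n: "3 \<le> n" and V: "finite V" and "k < i"
    and inj: "inj_on u {0..k}" and uV: "u ` {0..k} \<subseteq> V"
  shows "(\<integral>\<^sup>+\<sigma>. chain_in_SmallDeltas n r i k u \<sigma> *
          (\<Prod>j\<in>{0..k}. ennreal (\<sigma> (u j) - chain_floor n r i k u j \<sigma>) ^ (if j < k then n - 2 else n - 1))
        \<partial>PiM V (\<lambda>_. unif01))
    \<le> ennreal (chain_prob_bound n r k)"
proof -
  define b where "b = big_len n r"
  define q where "q = small_len n r"
  define C where "C = (b + q) ^ ((n - 2) * k) * b ^ (n - 1)"
  have b: "b > 0" and q: "q > 0" using valid_params_pos[OF valid] by (simp_all add: b_def q_def)
  have weight_measurable: "chain_weight n r i k j \<in> borel_measurable borel" for j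
    unfolding chain_weight_def SmallDelta_eq by measurable
  have "(\<integral>\<^sup>+\<sigma>. chain_in_SmallDeltas n r i k u \<sigma> *
          (\<Prod>j\<in>{0..k}. ennreal (\<sigma> (u j) - chain_floor n r i k u j \<sigma>) ^ (if j < k then n - 2 else n - 1))
        \<partial>PiM V (\<lambda>_. unif01))
      \<le> (\<integral>\<^sup>+\<sigma>. ennreal C * (\<Prod>j\<in>{0..k}. chain_weight n r i k j (\<sigma> (u j))) \<partial>PiM V (\<lambda>_. unif01))"
    unfolding C_def b_def q_def
    by (intro nn_integral_mono chain_gap_powers_le_weights[OF valid \<open>k < i\<close>])
  also have "\<dots> = ennreal C * (\<Prod>j\<in>{0..k}. \<integral>\<^sup>+x. chain_weight n r i k j x \<partial>unif01)"
  proof -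
    have "(\<lambda>\<sigma>. \<Prod>j\<in>{0..k}. chain_weight n r i k j (\<sigma> (u j))) \<in> borel_measurable (PiM V (\<lambda>_. unif01))"
      using weight_measurable
      by (intro borel_measurable_prod_ennreal measurable_compose[OF measurable_coordinate])
    then show ?thesis
      by (simp add: nn_integral_cmult nn_integral_PiM_prod_coordinates[OF V inj uV weight_measurable])
  qed
  also have "\<dots> \<le> ennreal C * ennreal (q ^ k * exp (real (n - 1) * q / b) * (b + q) / real (n - 2))"
    using prod_nn_integral_chain_weight_le[OF valid n] by (intro mult_left_mono) (auto simp: b_def q_def)
  also have "\<dots> = ennreal (chain_prob_bound n r k)"
    using b q by (simp add: chain_prob_bound_def C_def b_def q_def period_def ennreal_mult'[symmetric]
        mult_ac)
  finally show ?thesis .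
qed

lemma nn_integral_chain_dominator_le:
  fixes V :: "'a set"
  assumes valid: "valid_params n r" and n: "3 \<le> n" and V: "finite V"
    and uniform: "\<forall>e\<in>E. e \<subseteq> V \<and> card e = n"
    and chain: "witness_chain n r E i k es v \<sigma>\<^sub>0" and "k < i"
  shows "(\<integral>\<^sup>+\<sigma>. chain_dominator n r i k es v \<sigma> \<partial>PiM V (\<lambda>_. unif01)) \<le> ennreal (chain_prob_bound n r k)"
  using nn_integral_chain_dominator_le_gaps[OF assms] nn_integral_chain_gaps_le[OF valid n V \<open>k < i\<close>]
    witness_chain_shape(1,2)[OF valid n uniform chain \<open>k < i\<close>]
  by (meson order_trans)

section \<open>The expected number of recoloured vertices\<close>

text \<open>Chains that no weighting witnesses contribute nothing; for the others
  witness_chain_shape applies.\<close>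
definition chain_majorant ::
    "nat \<Rightarrow> nat \<Rightarrow> 'a set set \<Rightarrow> nat \<Rightarrow> nat \<Rightarrow> (nat \<Rightarrow> 'a set) \<Rightarrow> 'a \<Rightarrow> ('a \<Rightarrow> real) \<Rightarrow> ennreal"
  where
  "chain_majorant n r E i k es v \<sigma> =
     (if \<exists>\<sigma>'. witness_chain n r E i k es v \<sigma>' then chain_dominator n r i k es v \<sigma> else 0)"

lemma measurable_chain_majorant:
  "chain_majorant n r E i k es v \<in> borel_measurable (PiM V (\<lambda>_. unif01))"
proof -
  have "(\<lambda>\<sigma>. if c then chain_dominator n r i k es v \<sigma> else 0) \<in> borel_measurable (PiM V (\<lambda>_. unif01))"
    for c
    by (cases c) (simp_all add: measurable_chain_dominator)
  then show ?thesis unfolding chain_majorant_def[abs_def] .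
qed

lemma nn_integral_chain_majorant_le:
  fixes V :: "'a set"
  assumes "valid_params n r" "3 \<le> n" "finite V" "\<forall>e\<in>E. e \<subseteq> V \<and> card e = n" "k < i"
  shows "(\<integral>\<^sup>+\<sigma>. chain_majorant n r E i k es v \<sigma> \<partial>PiM V (\<lambda>_. unif01)) \<le> ennreal (chain_prob_bound n r k)"
  using nn_integral_chain_dominator_le[OF assms(1-4) _ assms(5)]
  by (cases "\<exists>\<sigma>'. witness_chain n r E i k es v \<sigma>'") (auto simp: chain_majorant_def)

lemma finite_edges:
  assumes "finite V" and "\<forall>e\<in>E. e \<subseteq> V \<and> card e = n"
  shows "finite E" and "\<forall>e\<in>E. finite e"
  using assms by (auto intro: finite_subset[of _ "Pow V"] finite_subset)

lemma Xcnt_le_chain_majorants: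
  fixes V :: "'a set"
  assumes valid: "valid_params n r" and V: "finite V" and uniform: "\<forall>e\<in>E. e \<subseteq> V \<and> card e = n"
    and i: "1 \<le> i" "i < r"
  shows "ennreal (real (Xcnt n r V E i \<sigma>))
    \<le> (\<Sum>k<i. \<Sum>es\<in>PiE {0..k} (\<lambda>_. E). \<Sum>v\<in>es 0. chain_majorant n r E i k es v \<sigma>)"
proof -
  note E_fin = finite_edges(1)[OF V uniform] and edges_fin = finite_edges(2)[OF V uniform]
  define A where "A = {v \<in> V. \<sigma> v \<in> SmallDelta n r i \<and> C0 n r V E \<sigma> v = i + 1}"
  define G where "G v = (\<Sum>k<i. \<Sum>es\<in>PiE {0..k} (\<lambda>_. E). if v \<in> es 0 then chain_majorant n r E i k es v \<sigma> else 0)" for v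
  have covered: "1 \<le> G v" if "v \<in> A" for v
  proof -
    have "\<sigma> v \<in> SmallDelta n r i" "alg1_iter n r E \<sigma> (Suc (card V)) v = i + 1"
      using that by (auto simp: A_def C0_def)
    then obtain k es where k: "k < i" and chain: "witness_chain n r E i k es v \<sigma>"
      using colour_up_imp_witness_chain[OF valid edges_fin i] by blast
    define es' where "es' = restrict es {0..k}"
    have chain': "witness_chain n r E i k es' v \<sigma>"
      using chain by (simp add: es'_def witness_chain_restrict)
    have es': "es' \<in> PiE {0..k} (\<lambda>_. E)"
      using chain unfolding es'_def witness_chain_def by auto
    have "1 = (if v \<in> es' 0 then chain_majorant n r E i k es' v \<sigma> else 0)"
      using witness_chain_head(1)[OF chain'] witness_chain_dominator[OF chain'] chain'
      by (auto simp: chain_majorant_def)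
    also have "\<dots> \<le> (\<Sum>es\<in>PiE {0..k} (\<lambda>_. E). if v \<in> es 0 then chain_majorant n r E i k es v \<sigma> else 0)"
      using E_fin by (intro member_le_sum[OF es'] finite_PiE) auto
    also have "\<dots> \<le> G v"
      unfolding G_def using k by (intro member_le_sum[of k "{..<i}"]) auto
    finally show ?thesis .
  qed
  have "ennreal (real (Xcnt n r V E i \<sigma>)) = (\<Sum>v\<in>A. 1)"
    by (simp add: Xcnt_def A_def ennreal_of_nat_eq_real_of_nat)
  also have "\<dots> \<le> (\<Sum>v\<in>A. G v)" using covered by (intro sum_mono) auto
  also have "\<dots> \<le> (\<Sum>v\<in>V. G v)" using V by (intro sum_mono2) (auto simp: A_def)
  also have "\<dots> = (\<Sum>k<i. \<Sum>es\<in>PiE {0..k} (\<lambda>_. E). \<Sum>v\<in>V. if v \<in> es 0 then chain_majorant n r E i k es v \<sigma> else 0)"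
    unfolding G_def by (subst sum.swap) (simp add: sum.swap[of _ V])
  also have "\<dots> = (\<Sum>k<i. \<Sum>es\<in>PiE {0..k} (\<lambda>_. E). \<Sum>v\<in>es 0. chain_majorant n r E i k es v \<sigma>)"
  proof (rule sum.cong[OF refl], rule sum.cong[OF refl])
    fix k es assume "k \<in> {..<i}" "es \<in> PiE {0..k} (\<lambda>_. E)"
    then have "es 0 \<in> E" using PiE_mem[of es "{0..k}" "\<lambda>_. E" 0] by simp
    then have "es 0 \<subseteq> V" using uniform by blast
    then show "(\<Sum>v\<in>V. if v \<in> es 0 then chain_majorant n r E i k es v \<sigma> else 0) = (\<Sum>v\<in>es 0. chain_majorant n r E i k es v \<sigma>)"
      using V by (simp add: sum.If_cases Int_absorb1 Int_commute)
  qed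
  finally show ?thesis .
qed

lemma nn_integral_Xcnt_le:
  fixes V :: "'a set"
  assumes valid: "valid_params n r" and n: "3 \<le> n" and V: "finite V"
    and uniform: "\<forall>e\<in>E. e \<subseteq> V \<and> card e = n" and i: "1 \<le> i" "i < r"
  shows "(\<integral>\<^sup>+\<sigma>. ennreal (real (Xcnt n r V E i \<sigma>)) \<partial>PiM V (\<lambda>_. unif01))
    \<le> ennreal (\<Sum>k<i. real n * real (card E) ^ (k + 1) * chain_prob_bound n r k)"
proof -
  have "(\<integral>\<^sup>+\<sigma>. ennreal (real (Xcnt n r V E i \<sigma>)) \<partial>PiM V (\<lambda>_. unif01))
      \<le> (\<integral>\<^sup>+\<sigma>. (\<Sum>k<i. \<Sum>es\<in>PiE {0..k} (\<lambda>_. E). \<Sum>v\<in>es 0. chain_majorant n r E i k es v \<sigma>) \<partial>PiM V (\<lambda>_. unif01))"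
    by (intro nn_integral_mono Xcnt_le_chain_majorants[OF valid V uniform i])
  also have "\<dots> = (\<Sum>k<i. \<Sum>es\<in>PiE {0..k} (\<lambda>_. E). \<Sum>v\<in>es 0. \<integral>\<^sup>+\<sigma>. chain_majorant n r E i k es v \<sigma> \<partial>PiM V (\<lambda>_. unif01))"
  proof -
    have "chain_majorant n r E i k es v \<in> borel_measurable (PiM V (\<lambda>_. unif01))" for k es v
      by (rule measurable_chain_majorant)
    then show ?thesis by (simp add: nn_integral_sum borel_measurable_sum)
  qed
  also have "\<dots> \<le> (\<Sum>k<i. \<Sum>es\<in>PiE {0..k} (\<lambda>_. E). \<Sum>v\<in>es 0. ennreal (chain_prob_bound n r k))"
    using nn_integral_chain_majorant_le[OF valid n V uniform] by (intro sum_mono) auto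
  also have "\<dots> = (\<Sum>k<i. ennreal (real n * real (card E) ^ (k + 1) * chain_prob_bound n r k))"
  proof (intro sum.cong refl)
    fix k :: nat
    have "card (es 0) = n" if "es \<in> PiE {0..k} (\<lambda>_. E)" for es
      using that uniform PiE_mem[of es "{0..k}" "\<lambda>_. E" 0] by simp
    then have "(\<Sum>es\<in>PiE {0..k} (\<lambda>_. E). \<Sum>v\<in>es 0. ennreal (chain_prob_bound n r k))
        = of_nat (card (PiE {0..k} (\<lambda>_. E))) * (of_nat n * ennreal (chain_prob_bound n r k))"
      by simp
    also have "\<dots> = ennreal (real n * real (card E) ^ (k + 1) * chain_prob_bound n r k)"
      using chain_prob_bound_nonneg[OF valid]
      by (simp add: card_PiE ennreal_of_nat_eq_real_of_nat ennreal_mult mult_ac)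
    finally show "(\<Sum>es\<in>PiE {0..k} (\<lambda>_. E). \<Sum>v\<in>es 0. ennreal (chain_prob_bound n r k))
        = ennreal (real n * real (card E) ^ (k + 1) * chain_prob_bound n r k)" .
  qed
  also have "\<dots> = ennreal (\<Sum>k<i. real n * real (card E) ^ (k + 1) * chain_prob_bound n r k)"
    using chain_prob_bound_nonneg[OF valid] by (intro sum_ennreal) simp
  finally show ?thesis .
qed

section \<open>Numerical estimates for large n\<close>

locale large_parameters =
  fixes n r :: nat
  assumes r_ge_2: "2 \<le> r" and n_ge_100: "100 \<le> n"
    and ln_n_ge_1: "1 \<le> ln (real n)" and ln_n_sq_le: "ln (real n) ^ 2 \<le> real n / 100"
begin

definition Lambda :: real where "Lambda = real n / ln (real n)"

lemma Lambda_gt_1: "1 < Lambda"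
  using ln_n_ge_1 n_ge_100 ln_less_self[of "real n"] by (simp add: Lambda_def)

lemma ln_Lambda_pos: "0 < ln Lambda"
  using Lambda_gt_1 by simp

lemma ln_Lambda_le: "ln Lambda \<le> ln (real n)"
  using ln_n_ge_1 n_ge_100 by (simp add: Lambda_def ln_div)

lemma ln_Lambda_sq_le: "ln Lambda * ln Lambda / real n \<le> 1 / 100"
proof -
  have "ln Lambda * ln Lambda \<le> ln (real n) ^ 2"
    using ln_Lambda_le ln_Lambda_pos by (simp add: power2_eq_square mult_mono)
  then show ?thesis using ln_n_sq_le n_ge_100 by (simp add: field_simps)
qed

lemma ln_Lambda_le_n: "ln Lambda / real n \<le> 1 / 100"
proof -
  have "ln (real n) \<le> ln (real n) ^ 2" using ln_n_ge_1 by (simp add: power2_eq_square)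
  then have "ln Lambda \<le> real n / 100" using ln_Lambda_le ln_n_sq_le by linarith
  then show ?thesis using n_ge_100 by (simp add: field_simps)
qed

lemma pval_eq: "pval n r = (real r - 1) / real r * ln Lambda / real n"
  by (simp add: pval_def Lambda_def)

lemma pval_pos: "0 < pval n r"
  using ln_Lambda_pos n_ge_100 r_ge_2 by (simp add: pval_eq)

lemma pval_le: "pval n r \<le> ln Lambda / real n"
proof -
  have "pval n r = (real r - 1) / real r * (ln Lambda / real n)" by (simp add: pval_eq)
  also have "\<dots> \<le> 1 * (ln Lambda / real n)"
  proof (rule mult_right_mono)
    show "0 \<le> ln Lambda / real n" using ln_Lambda_pos by simp
  qed (use r_ge_2 in simp)
  finally show ?thesis by simp
qed

lemma pval_small: "pval n r \<le> 1 / 100"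
  using pval_le ln_Lambda_le_n by linarith

lemma valid: "valid_params n r"
  using r_ge_2 pval_pos pval_small by (simp add: valid_params_def)

lemma small_len_eq: "small_len n r = ln Lambda / (real r * real n)"
proof -
  have "real r - 1 \<noteq> 0" "real r \<noteq> 0" "real n \<noteq> 0" using r_ge_2 n_ge_100 by auto
  then show ?thesis by (simp add: small_len_def pval_eq field_simps)
qed

lemma r_period_eq: "real r * period n r = 1 + small_len n r"
  using r_ge_2 by (simp add: period_def big_len_def small_len_def field_simps)


lemma edge_count_scaled_le:
  assumes "M \<le> 0.01 * Lambda powr ((real r - 1) / real r) * real r ^ (n - 1)"
  shows "M / real r ^ (n - 1) \<le> 0.01 * exp ((real r - 1) / real r * ln Lambda)"
proof -
  have "Lambda powr ((real r - 1) / real r) = exp ((real r - 1) / real r * ln Lambda)"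
    using Lambda_gt_1 n_ge_100 by (auto simp: powr_def)
  moreover have "real r ^ (n - 1) > 0" using r_ge_2 by simp
  ultimately show ?thesis using assms by (simp add: pos_divide_le_eq)
qed

lemma r_period_power_le: "(real r * period n r) ^ n \<le> exp (ln Lambda / real r)"
proof -
  have "(real r * period n r) ^ n = (1 + small_len n r) ^ n" by (simp add: r_period_eq)
  also have "\<dots> \<le> exp (small_len n r) ^ n"
    using valid_params_pos[OF valid] by (intro power_mono) auto
  also have "\<dots> = exp (real n * small_len n r)" by (simp add: exp_of_nat_mult[symmetric])
  also have "real n * small_len n r = ln Lambda / real r"
    using n_ge_100 by (simp add: small_len_eq field_simps)
  finally show ?thesis .
qed

lemma chain_ratio_le:
  assumes "0 \<le> M" and "M \<le> 0.01 * Lambda powr ((real r - 1) / real r) * real r ^ (n - 1)"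
  shows "M * period n r ^ (n - 2) * small_len n r \<le> 1 / 100"
proof -
  define D where "D = period n r"
  define q where "q = small_len n r"
  have D: "D > 0" and q: "q > 0" and r: "real r > 0"
    using valid_params_pos[OF valid] r_ge_2 by (auto simp: D_def q_def)
  have "M * D ^ (n - 2) * q = (M / real r ^ (n - 1)) * (real r * D) ^ n * (q / (real r * D ^ 2))"
  proof -
    have "n = (n - 2) + 2" "n = Suc (n - 1)" using n_ge_100 by simp_all
    then have "D ^ n = D ^ (n - 2) * D ^ 2" "real r ^ n = real r ^ (n - 1) * real r"
      by (metis power_add, metis power_Suc2)
    then show ?thesis using r D by (simp add: power_mult_distrib field_simps)
  qed
  also have "\<dots> \<le> (0.01 * exp ((real r - 1) / real r * ln Lambda)) * exp (ln Lambda / real r) * (q * real r)"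
  proof (intro mult_mono)
    have "1 \<le> (real r * D) ^ 2" using r_period_eq q by (simp add: D_def q_def one_le_power)
    then have "1 / (real r * D ^ 2) \<le> real r" using r D by (simp add: field_simps power2_eq_square)
    then show "q / (real r * D ^ 2) \<le> q * real r"
      using q by (simp add: mult_left_mono divide_inverse mult.commute)
  qed (use edge_count_scaled_le[OF assms(2)] r_period_power_le assms(1) D q r in \<open>simp_all add: D_def\<close>)
  also have "\<dots> = 0.01 * Lambda * (ln Lambda / real n)"
  proof -
    have "(real r - 1) / real r * ln Lambda + ln Lambda / real r = ln Lambda" using r by (simp add: field_simps)
    then have "exp ((real r - 1) / real r * ln Lambda) * exp (ln Lambda / real r) = Lambda"
      using Lambda_gt_1 by (simp flip: exp_add)
    moreover have "q * real r = ln Lambda / real n" using r by (simp add: q_def small_len_eq)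
    ultimately show ?thesis by simp
  qed
  also have "\<dots> = 0.01 * (ln Lambda / ln (real n))" using n_ge_100 by (simp add: Lambda_def)
  also have "\<dots> \<le> 0.01 * 1" using ln_Lambda_le ln_n_ge_1 by simp
  finally show ?thesis by (simp add: D_def q_def)
qed


lemma big_len_power_le:
  defines "p \<equiv> pval n r"
  shows "real r ^ (n - 1) * (big_len n r ^ (n - 1) * exp (real (n - 1) * small_len n r / big_len n r))
    \<le> exp (ln Lambda / (1 - p) - (real r - 1) / real r * ln Lambda) / (1 - p)"
proof -
  define b where "b = big_len n r"
  define q where "q = small_len n r"
  define X where "X = (1 - p) * exp (q / b)"
  have p: "0 < p" "p \<le> 1 / 100" using pval_pos pval_small by (simp_all add: p_def)
  have b: "b > 0" and q: "q > 0" using valid_params_pos[OF valid] by (simp_all add: b_def q_def)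
  have r: "real r > 0" using r_ge_2 by simp
  have "real r ^ (n - 1) * (b ^ (n - 1) * exp (real (n - 1) * q / b)) = X ^ (n - 1)"
  proof -
    have "real r * b = 1 - p" using r by (simp add: b_def big_len_def p_def)
    then have "real r ^ (n - 1) * b ^ (n - 1) = (1 - p) ^ (n - 1)"
      unfolding power_mult_distrib[symmetric] by simp
    moreover have "exp (real (n - 1) * q / b) = exp (q / b) ^ (n - 1)"
      by (simp add: exp_of_nat_mult[symmetric])
    ultimately show ?thesis
      unfolding X_def power_mult_distrib[of "1 - p"] by (simp only: mult.assoc[symmetric])
  qed
  also have "\<dots> \<le> X ^ n / (1 - p)"
  proof -
    obtain m where "n = Suc m" using n_ge_100 by (cases n) auto
    then have power: "X ^ n = X ^ (n - 1) * X" by (simp add: power_Suc2)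
    have "1 \<le> X / (1 - p)" using p q b by (simp add: X_def)
    moreover have "0 \<le> X ^ (n - 1)" using p by (simp add: X_def)
    ultimately have "X ^ (n - 1) * 1 \<le> X ^ (n - 1) * (X / (1 - p))" by (intro mult_left_mono)
    then show ?thesis by (simp add: power)
  qed
  also have "X ^ n \<le> exp (ln Lambda / (1 - p) - (real r - 1) / real r * ln Lambda)"
  proof -
    have "(1 - p) ^ n \<le> exp (- p) ^ n"
      using p by (intro power_mono) (auto simp: exp_ge_add_one_self[of "-p", simplified])
    also have "\<dots> = exp (- (real n * p))" by (simp add: exp_of_nat_mult[symmetric])
    finally have "X ^ n \<le> exp (- (real n * p)) * exp (real n * q / b)"
      by (simp add: X_def power_mult_distrib exp_of_nat_mult[symmetric] mult_right_mono)
    also have "real n * p = (real r - 1) / real r * ln Lambda"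
      using n_ge_100 by (simp add: p_def pval_eq)
    also have "real n * q / b = ln Lambda / (1 - p)"
      using n_ge_100 r p by (simp add: q_def b_def small_len_eq big_len_def p_def field_simps)
    finally show ?thesis by (simp flip: exp_add)
  qed
  then have "X ^ n / (1 - p) \<le> exp (ln Lambda / (1 - p) - (real r - 1) / real r * ln Lambda) / (1 - p)"
    using p by (simp add: divide_right_mono)
  finally show ?thesis by (simp add: b_def q_def)
qed

lemma exp_ln_Lambda_div_le: "exp (ln Lambda / (1 - pval n r)) \<le> 2 * Lambda"
proof -
  define p where "p = pval n r"
  have p: "0 < p" "p \<le> 1 / 100" using pval_pos pval_small by (simp_all add: p_def)
  have "ln Lambda * p \<le> ln Lambda * (ln Lambda / real n)"
    using ln_Lambda_pos pval_le by (intro mult_left_mono) (simp_all add: p_def)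
  then have "ln Lambda * p \<le> ln Lambda * ln Lambda / real n" by simp
  then have "ln Lambda * p \<le> 1 / 100" using ln_Lambda_sq_le by linarith
  then have "ln Lambda * p / (1 - p) \<le> (1 / 100) / (99 / 100)"
    using p ln_Lambda_pos by (intro frac_le) auto
  then have "exp (ln Lambda * p / (1 - p)) \<le> exp (1 / 2)" by simp
  then have "exp (ln Lambda * p / (1 - p)) \<le> 2" using exp_half_le2 by linarith
  moreover have "exp (ln Lambda / (1 - p)) = Lambda * exp (ln Lambda * p / (1 - p))"
  proof -
    have "ln Lambda / (1 - p) = ln Lambda + ln Lambda * p / (1 - p)" using p by (simp add: field_simps)
    then show ?thesis using Lambda_gt_1 by (simp add: exp_add)
  qed
  moreover have "Lambda * exp (ln Lambda * p / (1 - p)) \<le> Lambda * 2"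
    using calculation(1) Lambda_gt_1 by (intro mult_left_mono) auto
  ultimately show ?thesis unfolding p_def[symmetric] by (simp add: mult.commute)
qed

lemma chain_leading_term_le:
  assumes "0 \<le> M" and "M \<le> 0.01 * Lambda powr ((real r - 1) / real r) * real r ^ (n - 1)"
  shows "real n * M * big_len n r ^ (n - 1) * exp (real (n - 1) * small_len n r / big_len n r)
      * period n r / real (n - 2) \<le> 0.021 * Lambda / real r"
proof -
  define p where "p = pval n r"
  define q where "q = small_len n r"
  define W where "W = big_len n r ^ (n - 1) * exp (real (n - 1) * q / big_len n r)"
  have p: "0 < p" "p \<le> 1 / 100" using pval_pos pval_small by (simp_all add: p_def)
  have q: "0 < q" "q \<le> 1 / 100"
    using valid_params_pos[OF valid] pval_small r_ge_2 by (auto simp: q_def small_len_def)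
  have r: "real r > 0" using r_ge_2 by simp
  have n2: "real (n - 2) = real n - 2" using n_ge_100 by (simp add: of_nat_diff)
  have factor: "real n * period n r / real (n - 2) = (1 + q) * (real n / (real n - 2)) / real r"
  proof -
    have period: "period n r = (1 + q) / real r" using r_period_eq r by (simp add: q_def field_simps)
    have "real n - 2 \<noteq> 0" using n_ge_100 by simp
    then show ?thesis unfolding period n2 using r by (simp add: field_simps)
  qed
  have regroup: "x * y * b * e * D / c = (y / R) * (R * (b * e)) * (x * D / c)"
    if "R \<noteq> 0" for x y b e D c R :: real
    using that by (simp add: field_simps)
  have "real n * M * big_len n r ^ (n - 1) * exp (real (n - 1) * small_len n r / big_len n r)
      * period n r / real (n - 2)
      = (M / real r ^ (n - 1)) * (real r ^ (n - 1) * W) * (real n * period n r / real (n - 2))"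
    unfolding W_def q_def using r by (intro regroup) simp
  also have "\<dots> \<le> (0.01 * exp ((real r - 1) / real r * ln Lambda))
      * (exp (ln Lambda / (1 - p) - (real r - 1) / real r * ln Lambda) / (1 - p))
      * (real n * period n r / real (n - 2))"
    using edge_count_scaled_le[OF assms(2)] big_len_power_le assms(1) n_ge_100
      valid_params_pos[OF valid] p
    by (intro mult_mono mult_right_mono) (simp_all add: W_def q_def p_def)
  also have "\<dots> = 0.01 * exp (ln Lambda / (1 - p)) / (1 - p) * (real n * period n r / real (n - 2))"
    by (simp add: exp_diff)
  also have "\<dots> = 0.01 * (exp (ln Lambda / (1 - p)) / (1 - p)) * (real n * period n r / real (n - 2))"
    by simp
  also have "\<dots> \<le> 0.01 * (2 * Lambda * (100 / 99)) * ((101 / 100) * (100 / 98) / real r)"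
  proof (intro mult_mono mult_left_mono)
    have "1 / (1 - p) \<le> 100 / 99" using p by (simp add: field_simps)
    then have "exp (ln Lambda / (1 - p)) * (1 / (1 - p)) \<le> 2 * Lambda * (100 / 99)"
      using exp_ln_Lambda_div_le p Lambda_gt_1 by (intro mult_mono) (simp_all add: p_def)
    then show "exp (ln Lambda / (1 - p)) / (1 - p) \<le> 2 * Lambda * (100 / 99)" by simp
    have "real n / (real n - 2) \<le> 100 / 98" using n_ge_100 by (simp add: field_simps)
    then have "(1 + q) * (real n / (real n - 2)) \<le> (101 / 100) * (100 / 98)"
      using q n_ge_100 by (intro mult_mono) simp_all
    then show "real n * period n r / real (n - 2) \<le> (101 / 100) * (100 / 98) / real r"
      unfolding factor using r by (intro divide_right_mono) simp_all
  qed (use p Lambda_gt_1 r n_ge_100 valid_params_pos[OF valid] in simp_all)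
  also have "\<dots> = (0.02 * (100 / 99) * (101 / 100) * (100 / 98)) * (Lambda / real r)" by simp
  also have "\<dots> \<le> 0.021 * (Lambda / real r)"
    using Lambda_gt_1 by (intro mult_right_mono) simp_all
  also have "\<dots> = 0.021 * Lambda / real r" by simp
  finally show ?thesis .
qed


lemma chain_union_bound_le:
  assumes "0 \<le> M" and "M \<le> 0.01 * Lambda powr ((real r - 1) / real r) * real r ^ (n - 1)"
  shows "(\<Sum>k<i. real n * M ^ (k + 1) * chain_prob_bound n r k)
    \<le> 0.04 * exp 1 * real n / (real r * ln (real n))"
proof -
  define lead where "lead = real n * M * big_len n r ^ (n - 1)
    * exp (real (n - 1) * small_len n r / big_len n r) * period n r / real (n - 2)"
  define ratio where "ratio = M * period n r ^ (n - 2) * small_len n r"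
  have lead: "0 \<le> lead" "lead \<le> 0.021 * Lambda / real r"
    unfolding lead_def using assms(1) valid_params_pos[OF valid] chain_leading_term_le[OF assms]
    by (auto intro!: divide_nonneg_nonneg mult_nonneg_nonneg)
  have ratio: "0 \<le> ratio" "ratio \<le> 1 / 100"
    unfolding ratio_def using assms(1) valid_params_pos[OF valid] chain_ratio_le[OF assms]
    by (auto intro!: mult_nonneg_nonneg)
  have Lambda_r: "0 \<le> Lambda / real r" using Lambda_gt_1 by simp
  have geometric_nonneg: "0 \<le> (\<Sum>k<i. (1 / 100 :: real) ^ k)" by (intro sum_nonneg) simp
  have geometric: "(\<Sum>k<i. (1 / 100 :: real) ^ k) \<le> 100 / 99"
  proof -
    have "(\<Sum>k<i. (1 / 100 :: real) ^ k) = (1 - (1 / 100) ^ i) / (1 - 1 / 100)" by (simp add: sum_gp_strict)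
    also have "\<dots> \<le> 1 / (1 - 1 / 100)" by (intro divide_right_mono) auto
    finally show ?thesis by simp
  qed
  have identity: "x * y ^ (k + 1) * (D ^ (m * k) * b ^ a * q ^ k * e * D / c)
      = (x * y * b ^ a * e * D / c) * (y * D ^ m * q) ^ k" for x y D b q e c :: real and m a k :: nat
    by (simp add: power_mult_distrib power_mult[symmetric] mult.commute mult.left_commute)
  have "real n * M ^ (k + 1) * chain_prob_bound n r k = lead * ratio ^ k" for k
    unfolding chain_prob_bound_def lead_def ratio_def by (rule identity)
  then have "(\<Sum>k<i. real n * M ^ (k + 1) * chain_prob_bound n r k) = lead * (\<Sum>k<i. ratio ^ k)"
    by (simp add: sum_distrib_left)
  also have "\<dots> \<le> lead * (\<Sum>k<i. (1 / 100) ^ k)"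
    using lead ratio by (intro mult_left_mono sum_mono power_mono) auto
  also have "\<dots> \<le> 0.021 * Lambda / real r * (100 / 99)"
    using lead geometric Lambda_r geometric_nonneg by (intro mult_mono) simp_all
  also have "\<dots> = 0.021 * (100 / 99) * (Lambda / real r)" by simp
  also have "\<dots> \<le> 0.04 * exp 1 * (Lambda / real r)"
    using exp_ge_add_one_self[of 1] Lambda_r by (intro mult_right_mono) simp_all
  also have "\<dots> = 0.04 * exp 1 * real n / (real r * ln (real n))" by (simp add: Lambda_def)
  finally show ?thesis by simp
qed

lemma expectation_Xcnt_le:
  fixes V :: "'a set"
  assumes V: "finite V" and uniform: "\<forall>e\<in>E. e \<subseteq> V \<and> card e = n"
    and edges: "real (card E) \<le> 0.01 * Lambda powr ((real r - 1) / real r) * real r ^ (n - 1)"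
    and i: "i \<in> {1..r-1}"
  shows "integral\<^sup>L (weight_space V) (\<lambda>\<sigma>. real (Xcnt n r V E i \<sigma>))
    \<le> 0.04 * exp 1 * real n / (real r * ln (real n))"
proof -
  note E = finite_edges[OF V uniform]
  have "integral\<^sup>L (weight_space V) (\<lambda>\<sigma>. real (Xcnt n r V E i \<sigma>))
      = enn2real (\<integral>\<^sup>+\<sigma>. ennreal (real (Xcnt n r V E i \<sigma>)) \<partial>weight_space V)"
    unfolding weight_space_def using measurable_Xcnt[OF V E] by (intro integral_eq_nn_integral) auto
  also have "\<dots> \<le> (\<Sum>k<i. real n * real (card E) ^ (k + 1) * chain_prob_bound n r k)"
    using nn_integral_Xcnt_le[OF valid _ V uniform, of i] n_ge_100 r_ge_2 i
      chain_prob_bound_nonneg[OF valid]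
    by (intro enn2real_leI) (auto simp: weight_space_def intro!: sum_nonneg)
  also have "\<dots> \<le> 0.04 * exp 1 * real n / (real r * ln (real n))"
    using chain_union_bound_le[OF _ edges] by simp
  finally show ?thesis .
qed

lemma prob_Xcnt_all_le:
  fixes V :: "'a set"
  assumes V: "finite V" and uniform: "\<forall>e\<in>E. e \<subseteq> V \<and> card e = n"
    and edges: "real (card E) \<le> 0.01 * Lambda powr ((real r - 1) / real r) * real r ^ (n - 1)"
  shows "1 - 0.04 * exp 1 \<le> measure (weight_space V)
    {\<sigma> \<in> space (weight_space V). \<forall>i\<in>{1..r-1}. real (Xcnt n r V E i \<sigma>) \<le> real n / ln (real n)}"
proof -
  interpret P: prob_space "weight_space V"
    unfolding weight_space_def by (rule prob_space_PiM_unif01)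
  note E = finite_edges[OF V uniform]
  have integrable: "integrable (weight_space V) (\<lambda>\<sigma>. real (Xcnt n r V E i \<sigma>))" for i
  proof (rule P.integrable_const_bound[where B = "real (card V)"])
    show "AE \<sigma> in weight_space V. norm (real (Xcnt n r V E i \<sigma>)) \<le> real (card V)"
      using V by (simp add: Xcnt_def card_mono)
  qed (simp add: weight_space_def measurable_Xcnt[OF V E])
  have "1 - real (card {1..r-1}) * (0.04 * exp 1 * real n / (real r * ln (real n))) / Lambda
      \<le> P.prob {\<sigma> \<in> space (weight_space V). \<forall>i\<in>{1..r-1}. real (Xcnt n r V E i \<sigma>) \<le> Lambda}"
    using Lambda_gt_1 expectation_Xcnt_le[OF V uniform edges]
    by (intro P.prob_all_below_ge integrable) auto
  moreover have "real (card {1..r-1}) * (0.04 * exp 1 * real n / (real r * ln (real n))) / Lambda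
      = 0.04 * exp 1 * ((real r - 1) / real r)"
  proof -
    have cancel: "a * (c * x / (y * z)) / (x / z) = c * (a / y)"
      if "x \<noteq> 0" "z \<noteq> 0" for a c x y z :: real
      using that by (simp add: field_simps)
    have "real (card {1..r-1}) = real r - 1" using r_ge_2 by (simp add: of_nat_diff)
    then show ?thesis unfolding Lambda_def using n_ge_100 ln_n_ge_1 by (simp add: cancel)
  qed
  moreover have "0.04 * exp 1 * ((real r - 1) / real r) \<le> 0.04 * exp 1 * 1"
    using r_ge_2 by (intro mult_left_mono) simp_all
  ultimately have "1 - 0.04 * exp 1 \<le> P.prob
      {\<sigma> \<in> space (weight_space V). \<forall>i\<in>{1..r-1}. real (Xcnt n r V E i \<sigma>) \<le> Lambda}"
    by linarith
  then show ?thesis by (simp only: Lambda_def)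
qed

end

lemma eventually_large_parameters: "\<exists>N. \<forall>n\<ge>N. \<forall>r\<ge>2. large_parameters n r"
proof -
  have "eventually (\<lambda>n::nat. 1 \<le> ln (real n)) sequentially"
    and "eventually (\<lambda>n::nat. ln (real n) ^ 2 \<le> real n / 100) sequentially"
    by real_asymp+
  then have "eventually (\<lambda>n. 100 \<le> n \<and> 1 \<le> ln (real n) \<and> ln (real n) ^ 2 \<le> real n / 100) sequentially"
    using eventually_ge_at_top[of "100::nat"] by eventually_elim auto
  then show ?thesis by (auto simp: eventually_sequentially large_parameters_def)
qed

theorem lemma4:
  "\<exists>N::nat. \<forall>n\<ge>N. \<forall>(r::nat) (V::'a set) (E::'a set set).
     2 \<le> r \<and> real r < ln (real n) powr (1/5) \<and> finite V \<and>
     (\<forall>e\<in>E. e \<subseteq> V \<and> card e = n) \<and>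
     real (card E) \<le> 0.01 * (real n / ln (real n)) powr ((real r - 1) / real r) * real r ^ (n - 1)
     \<longrightarrow>
     (\<forall>i\<in>{1..r-1}.
        (\<lambda>\<sigma>. real (Xcnt n r V E i \<sigma>)) \<in> borel_measurable (weight_space V) \<and>
        integral\<^sup>L (weight_space V) (\<lambda>\<sigma>. real (Xcnt n r V E i \<sigma>))
          \<le> 0.04 * exp 1 * real n / (real r * ln (real n))) \<and>
     measure (weight_space V)
       {\<sigma> \<in> space (weight_space V). \<forall>i\<in>{1..r-1}. real (Xcnt n r V E i \<sigma>) \<le> real n / ln (real n)}
       \<ge> 1 - 0.04 * exp 1"
proof -
  obtain N where N: "\<And>n r. N \<le> n \<Longrightarrow> 2 \<le> r \<Longrightarrow> large_parameters n r"
    using eventually_large_parameters by blast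
  show ?thesis
  proof (intro exI allI impI conjI ballI)
    fix n r :: nat and V :: "'a set" and E :: "'a set set" and i
    assume "N \<le> n" and hyps: "2 \<le> r \<and> real r < ln (real n) powr (1/5) \<and> finite V \<and>
      (\<forall>e\<in>E. e \<subseteq> V \<and> card e = n) \<and>
      real (card E) \<le> 0.01 * (real n / ln (real n)) powr ((real r - 1) / real r) * real r ^ (n - 1)"
    then interpret large_parameters n r using N by blast
    have V: "finite V" and uniform: "\<forall>e\<in>E. e \<subseteq> V \<and> card e = n"
      and edges: "real (card E) \<le> 0.01 * Lambda powr ((real r - 1) / real r) * real r ^ (n - 1)"
      using hyps by (auto simp: Lambda_def)
    note E = finite_edges[OF V uniform]
    show "(\<lambda>\<sigma>. real (Xcnt n r V E i \<sigma>)) \<in> borel_measurable (weight_space V)"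
      unfolding weight_space_def by (rule measurable_Xcnt[OF V E])
    show "i \<in> {1..r-1} \<Longrightarrow> integral\<^sup>L (weight_space V) (\<lambda>\<sigma>. real (Xcnt n r V E i \<sigma>))
        \<le> 0.04 * exp 1 * real n / (real r * ln (real n))"
      using expectation_Xcnt_le[OF V uniform edges] .
    show "1 - 0.04 * exp 1 \<le> measure (weight_space V)
        {\<sigma> \<in> space (weight_space V). \<forall>i\<in>{1..r-1}. real (Xcnt n r V E i \<sigma>) \<le> real n / ln (real n)}"
      by (rule prob_Xcnt_all_le[OF V uniform edges])
  qed
qed

end
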